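(* Let $x_*$ be a feasible point of problem $(\mathcal{P})$. Then: (1) a Lagrange multiplier of $(\mathcal{P})$ at $x_*$ exists if and only if there exists $c\ge0$ such that $0\in\partial\Phi_c(x_* )+N_A(x_* )$; (2) the following are equivalent: (a) $\max_{\omega\in W(x_* )}\langle\nabla_xf(x_*,\omega),h\rangle>0$ for all $h\in T_A(x_* )\setminus\{0\}$ with $DG(x_* )h\in T_K(G(x_* ))$; (b) there exists $c\ge0$ such that $0\in\operatorname{int}(\partial\Phi_c(x_* )+N_A(x_* ))$; (c) there exists $c\ge0$ such that $\Phi_c$ satisfies the first order growth condition on $A$ at $x_*$; (3) if $x_*$ is a locally optimal solution of $(\mathcal{P})$ at which Robinson's constraint qualification holds, then the penalty function $\Phi_c$ is locally exact at $x_*$; moreover, if Robinson's constraint qualification holds at $x_*$, then the first order growth condition for $(\mathcal{P})$ holds at $x_*$ if and only if $\Phi_c$ satisfies the first order growth condition on $A$ at $x_*$ (for some $c\ge0$).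
   Context: Standing setting: $A\subseteq\mathbb{R}^d$ nonempty closed convex; $Y$ real Banach space with dual $Y^*$, pairing $\langle\cdot,\cdot\rangle$, norm $\|\cdot\|$; $K\subset Y$ nonempty closed convex cone; $W$ compact Hausdorff space; $f:\mathbb{R}^d\times W\to\mathbb{R}$ differentiable in $x$ for each $\omega$ with $f,\nabla_xf$ jointly continuous; $G:\mathbb{R}^d\to Y$ continuously Fréchet differentiable. $F(x)=\max_\omega f(x,\omega)$, $W(x)=\{\omega:f(x,\omega)=F(x)\}$, $\partial F(x)=\operatorname{co}\{\nabla_xf(x,\omega):\omega\in W(x)\}$. Problem $(\mathcal{P})$: minimise $F(x)$ s.t. $G(x)\in K$, $x\in A$; feasible set $\Omega$. Contingent cone $T_C(x)$: set of $h$ with $\alpha_n\downarrow0$, $h_n\to h$, $x+\alpha_nh_n\in C$; $N_A(x)=\{z:\langle z,v\rangle\le0\ \forall v\in T_A(x)\}$. $K^*=\{y^*:\langle y^*,y\rangle\le0\ \forall y\in K\}$. Lagrange multiplier at feasible $x_*$: $\lambda_*\in K^*$ with $\langle\lambda_*,G(x_* )\rangle=0$ and $[L(\cdot,\lambda_* )]'(x_*,h)\ge0$ for all $h\in T_A(x_* )$, where $L(x,\lambda)=F(x)+\langle\lambda,G(x)\rangle$. Robinson's constraint qualification at $x_*$: $0\in\operatorname{int}\{G(x_* )+DG(x_* )(A-x_* )-K\}$. Penalty function $\Phi_c(x)=F(x)+c\operatorname{dist}(G(x),K)$, $c\ge0$; for $x$ with $G(x)\in K$, $\partial\Phi_c(x)=\partial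 F(x)+c\{[DG(x)]^*y^*:y^*\in Y^*,\|y^*\|\le1,\langle y^*,y-G(x)\rangle\le0\ \forall y\in K\}$, where $[T]^*y^*\in\mathbb{R}^d$ is defined by $\langle[T]^*y^*,h\rangle=\langle y^*,Th\rangle$. $\Phi_c$ is locally exact at a locally optimal solution $x_*$ if there is $c_*\ge0$ such that $x_*$ is a local minimiser of $\Phi_c$ on $A$ for all $c\ge c_*$. First order growth for $(\mathcal{P})$ at $x_*$: $\exists\rho>0$, neighbourhood $\mathcal{O}$, $F(x)\ge F(x_* )+\rho|x-x_*|$ on $\mathcal{O}\cap\Omega$. $\Phi_c$ satisfies the first order growth condition on $A$ at $x_*$ if $\exists\rho>0$, neighbourhood $\mathcal{O}$, with $\Phi_c(x)\ge\Phi_c(x_* )+\rho|x-x_*|$ for all $x\in\mathcal{O}\cap A$. *)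

theory Defs
  imports "HOL-Analysis.Analysis"
begin

definition contingent_cone :: "'a::real_normed_vector set \<Rightarrow> 'a \<Rightarrow> 'a set" where
  "contingent_cone C x = {h. \<exists>(\<alpha>::nat \<Rightarrow> real) hs. (\<forall>n. \<alpha> n > 0) \<and> \<alpha> \<longlonglongrightarrow> 0 \<and>
      hs \<longlonglongrightarrow> h \<and> (\<forall>n. x + \<alpha> n *\<^sub>R hs n \<in> C)}"

definition normal_cone :: "'a::euclidean_space set \<Rightarrow> 'a \<Rightarrow> 'a set" where
  "normal_cone A x = {z. \<forall>v\<in>contingent_cone A x. z \<bullet> v \<le> 0}"

definition polar_cone :: "'b::real_normed_vector set \<Rightarrow> ('b \<Rightarrow>\<^sub>L real) set" where
  "polar_cone K = {y. \<forall>k\<in>K. blinfun_apply y k \<le> 0}"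

definition maxfun :: "('a \<Rightarrow> 'w \<Rightarrow> real) \<Rightarrow> 'w set \<Rightarrow> 'a \<Rightarrow> real" where
  "maxfun f W x = (SUP \<omega>\<in>W. f x \<omega>)"

definition active_set :: "('a \<Rightarrow> 'w \<Rightarrow> real) \<Rightarrow> 'w set \<Rightarrow> 'a \<Rightarrow> 'w set" where
  "active_set f W x = {\<omega>\<in>W. f x \<omega> = maxfun f W x}"

definition subdiff_max ::
  "('a::euclidean_space \<Rightarrow> 'w \<Rightarrow> real) \<Rightarrow> ('a \<Rightarrow> 'w \<Rightarrow> 'a) \<Rightarrow> 'w set \<Rightarrow> 'a \<Rightarrow> 'a set" where
  "subdiff_max f gf W x = convex hull (gf x ` active_set f W x)"

definition dir_deriv :: "('a::real_normed_vector \<Rightarrow> real) \<Rightarrow> 'a \<Rightarrow> 'a \<Rightarrow> real" where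
  "dir_deriv g x h = Lim (at_right 0) (\<lambda>t. (g (x + t *\<^sub>R h) - g x) / t)"

definition lagrangian ::
  "('a \<Rightarrow> 'w \<Rightarrow> real) \<Rightarrow> 'w set \<Rightarrow> ('a \<Rightarrow> 'b::real_normed_vector) \<Rightarrow> ('b \<Rightarrow>\<^sub>L real) \<Rightarrow> 'a \<Rightarrow> real" where
  "lagrangian f W G lam x = maxfun f W x + blinfun_apply lam (G x)"

definition is_lagrange_multiplier ::
  "('a::euclidean_space \<Rightarrow> 'w \<Rightarrow> real) \<Rightarrow> 'w set \<Rightarrow> 'a set \<Rightarrow> ('a \<Rightarrow> 'b::real_normed_vector)
    \<Rightarrow> 'b set \<Rightarrow> 'a \<Rightarrow> ('b \<Rightarrow>\<^sub>L real) \<Rightarrow> bool" where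
  "is_lagrange_multiplier f W A G K xs lam \<longleftrightarrow>
     lam \<in> polar_cone K \<and> blinfun_apply lam (G xs) = 0 \<and>
     (\<forall>h\<in>contingent_cone A xs. dir_deriv (lagrangian f W G lam) xs h \<ge> 0)"

text \<open>[T]^* y*: the vector in R^d with <[T]^* y*, h> = y*(T h).\<close>
definition adjoint_vec :: "('a::euclidean_space \<Rightarrow>\<^sub>L 'b::real_normed_vector) \<Rightarrow> ('b \<Rightarrow>\<^sub>L real) \<Rightarrow> 'a" where
  "adjoint_vec T y = (\<Sum>b\<in>Basis. blinfun_apply y (blinfun_apply T b) *\<^sub>R b)"

definition penalty ::
  "('a \<Rightarrow> 'w \<Rightarrow> real) \<Rightarrow> 'w set \<Rightarrow> ('a \<Rightarrow> 'b::metric_space) \<Rightarrow> 'b set \<Rightarrow> real \<Rightarrow> 'a \<Rightarrow> real" where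
  "penalty f W G K c x = maxfun f W x + c * infdist (G x) K"

text \<open>Subdifferential of Phi_c at a feasible point, as given by the paper's formula.\<close>
definition subdiff_penalty ::
  "('a::euclidean_space \<Rightarrow> 'w \<Rightarrow> real) \<Rightarrow> ('a \<Rightarrow> 'w \<Rightarrow> 'a) \<Rightarrow> 'w set \<Rightarrow> ('a \<Rightarrow> 'b::real_normed_vector)
    \<Rightarrow> ('a \<Rightarrow> ('a \<Rightarrow>\<^sub>L 'b)) \<Rightarrow> 'b set \<Rightarrow> real \<Rightarrow> 'a \<Rightarrow> 'a set" where
  "subdiff_penalty f gf W G DG K c x =
     {u + c *\<^sub>R adjoint_vec (DG x) y | u y. u \<in> subdiff_max f gf W x \<and> norm y \<le> 1 \<and>
        (\<forall>k\<in>K. blinfun_apply y (k - G x) \<le> 0)}"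

definition minkowski_sum :: "'a::ab_group_add set \<Rightarrow> 'a set \<Rightarrow> 'a set" where
  "minkowski_sum S T = {s + t | s t. s \<in> S \<and> t \<in> T}"

definition local_min_on :: "('a::metric_space \<Rightarrow> real) \<Rightarrow> 'a set \<Rightarrow> 'a \<Rightarrow> bool" where
  "local_min_on g S x \<longleftrightarrow> (\<exists>\<epsilon>>0. \<forall>y\<in>S \<inter> ball x \<epsilon>. g x \<le> g y)"

definition first_order_growth_on :: "('a::real_normed_vector \<Rightarrow> real) \<Rightarrow> 'a set \<Rightarrow> 'a \<Rightarrow> bool" where
  "first_order_growth_on g S x \<longleftrightarrow>
     (\<exists>\<rho>>0. \<exists>U. open U \<and> x \<in> U \<and> (\<forall>y\<in>U \<inter> S. g y \<ge> g x + \<rho> * norm (y - x)))"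

definition robinson_cq ::
  "'a set \<Rightarrow> ('a::real_normed_vector \<Rightarrow> 'b::real_normed_vector) \<Rightarrow> ('a \<Rightarrow> ('a \<Rightarrow>\<^sub>L 'b)) \<Rightarrow> 'b set \<Rightarrow> 'a \<Rightarrow> bool" where
  "robinson_cq A G DG K xs \<longleftrightarrow>
     0 \<in> interior {G xs + blinfun_apply (DG xs) (a - xs) - k | a k. a \<in> A \<and> k \<in> K}"

end

(*
  Write Phi_c'(h) = F'(xs; h) + c dist(DG xs h, T_K(G xs)) for the directional derivative of the
  penalty function at xs, where F'(xs; h) is the maximum of <grad_x f(xs, w), h> over the active
  parameters w (Danskin's theorem).  The support function of the unit-norm subgradients of
  dist(., K) at G xs is dist(., T_K(G xs)); in the Banach space Y this needs Hahn-Banach.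
  Consequently the support function of the set dPhi_c(xs) + N_A(xs) equals Phi_c' on T_A(xs) and
  is infinite elsewhere, so 0 is an interior point of that set iff Phi_c'(h) >= delta |h| on
  T_A(xs).  The same bound is equivalent to first order growth of Phi_c, by lower and upper
  first order expansions of Phi_c, and, for some large c, to the sufficient condition (a): on the
  compact set of unit tangent directions, either F'(xs; h) > 0 or dist(DG xs h, T_K) > 0.
  Lagrange multipliers are treated by separation in R^d after normalising the multiplier.
  Under Robinson's condition, Baire's theorem and a Newton-type iteration on A x K give the error
  bound dist(x, Omega) <= kappa dist(G x, K) near xs; since F is Lipschitz, Clarke's exact
  penalty argument transfers local minimality and first order growth from Omega to Phi_c on A.
*)

theory Submission
  imports Defs
begin

section \<open>Hahn-Banach theorem for sublinear functionals\<close>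

text \<open>Linear functionals on subspaces dominated by \<open>p\<close>, encoded by their graphs so that Zorn's lemma
  applies to \<open>\<subseteq>\<close>.\<close>

definition dominated_linear_graph :: "('v::real_vector \<Rightarrow> real) \<Rightarrow> ('v \<times> real) set \<Rightarrow> bool" where
  "dominated_linear_graph p H \<longleftrightarrow> (0, 0) \<in> H
     \<and> (\<forall>x a y b. (x, a) \<in> H \<longrightarrow> (y, b) \<in> H \<longrightarrow> (x + y, a + b) \<in> H)
     \<and> (\<forall>x a t. (x, a) \<in> H \<longrightarrow> (t *\<^sub>R x, t * a) \<in> H)
     \<and> (\<forall>x a b. (x, a) \<in> H \<longrightarrow> (x, b) \<in> H \<longrightarrow> a = b)
     \<and> (\<forall>x a. (x, a) \<in> H \<longrightarrow> a \<le> p x)"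

lemma dominated_linear_graphD:
  assumes "dominated_linear_graph p H"
  shows "(0, 0) \<in> H" "\<And>x a y b. (x, a) \<in> H \<Longrightarrow> (y, b) \<in> H \<Longrightarrow> (x + y, a + b) \<in> H"
    "\<And>x a t. (x, a) \<in> H \<Longrightarrow> (t *\<^sub>R x, t * a) \<in> H"
    "\<And>x a b. (x, a) \<in> H \<Longrightarrow> (x, b) \<in> H \<Longrightarrow> a = b"
    "\<And>x a. (x, a) \<in> H \<Longrightarrow> a \<le> p x"
  using assms unfolding dominated_linear_graph_def by blast+

lemma dominated_linear_graph_Union:
  assumes "C \<noteq> {}" and graphs: "\<And>H. H \<in> C \<Longrightarrow> dominated_linear_graph p H"
    and chain: "\<And>H H'. H \<in> C \<Longrightarrow> H' \<in> C \<Longrightarrow> H \<subseteq> H' \<or> H' \<subseteq> H"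
  shows "dominated_linear_graph p (\<Union>C)"
proof -
  have common: "\<exists>H\<in>C. q \<in> H \<and> q' \<in> H" if "q \<in> \<Union>C" "q' \<in> \<Union>C" for q q'
    using that chain by blast
  show ?thesis
    unfolding dominated_linear_graph_def
  proof (intro conjI allI impI)
    show "(0, 0) \<in> \<Union>C" using assms(1) graphs dominated_linear_graphD(1) by blast
  next
    fix x a y b assume "(x, a) \<in> \<Union>C" "(y, b) \<in> \<Union>C"
    then show "(x + y, a + b) \<in> \<Union>C" using common graphs dominated_linear_graphD(2) by blast
  next
    fix x a t assume "(x, a) \<in> \<Union>C"
    then show "(t *\<^sub>R x, t * a) \<in> \<Union>C" using graphs dominated_linear_graphD(3) by blast
  next
    fix x a b assume "(x, a) \<in> \<Union>C" "(x, b) \<in> \<Union>C"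
    then show "a = b" using common graphs dominated_linear_graphD(4) by metis
  next
    fix x a assume "(x, a) \<in> \<Union>C"
    then show "a \<le> p x" using graphs dominated_linear_graphD(5) by blast
  qed
qed

lemma dominated_linear_graph_line:
  fixes p :: "'v::real_vector \<Rightarrow> real"
  assumes p_add: "\<And>x y. p (x + y) \<le> p x + p y"
    and p_scale: "\<And>t x. t \<ge> 0 \<Longrightarrow> p (t *\<^sub>R x) = t * p x"
  shows "dominated_linear_graph p {(t *\<^sub>R v, t * p v) | t. True}" (is "dominated_linear_graph p ?L")
  unfolding dominated_linear_graph_def
proof (intro conjI allI impI)
  have p0: "p 0 = 0" using p_scale[of 0 v] by simp
  show "(0, 0) \<in> ?L" by (auto intro!: exI[of _ 0])
next
  fix x a y b assume "(x, a) \<in> ?L" "(y, b) \<in> ?L"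
  then obtain t s where "x = t *\<^sub>R v" "a = t * p v" "y = s *\<^sub>R v" "b = s * p v" by blast
  then show "(x + y, a + b) \<in> ?L" by (auto intro!: exI[of _ "t + s"] simp: scaleR_add_left distrib_right)
next
  fix x a t assume "(x, a) \<in> ?L"
  then obtain s where "x = s *\<^sub>R v" "a = s * p v" by blast
  then show "(t *\<^sub>R x, t * a) \<in> ?L" by (auto intro!: exI[of _ "t * s"])
next
  fix x a b assume "(x, a) \<in> ?L" "(x, b) \<in> ?L"
  then obtain t s where ts: "x = t *\<^sub>R v" "a = t * p v" "x = s *\<^sub>R v" "b = s * p v" by blast
  have "p 0 = 0" using p_scale[of 0 v] by simp
  then show "a = b" using ts by (cases "v = 0") (auto dest: scaleR_cancel_right[THEN iffD1])
next
  fix x a assume "(x, a) \<in> ?L"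
  then obtain t where ts: "x = t *\<^sub>R v" "a = t * p v" by blast
  have "0 \<le> p (t *\<^sub>R v) + p ((- t) *\<^sub>R v)"
    using p_add[of "t *\<^sub>R v" "(- t) *\<^sub>R v"] p_scale[of 0 v] by (simp add: scaleR_add_left[symmetric])
  then show "a \<le> p x" using ts p_scale[of t v] p_scale[of "- t" v] by (cases "t \<ge> 0") auto
qed

lemma dominated_linear_graph_extension:
  fixes p :: "'v::real_vector \<Rightarrow> real"
  assumes p_scale: "\<And>t x. t \<ge> 0 \<Longrightarrow> p (t *\<^sub>R x) = t * p x"
    and H: "dominated_linear_graph p H" and z: "\<nexists>a. (z, a) \<in> H"
    and c_lower: "\<And>x a. (x, a) \<in> H \<Longrightarrow> a - p (x - z) \<le> c"
    and c_upper: "\<And>x a. (x, a) \<in> H \<Longrightarrow> c \<le> p (x + z) - a"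
  shows "dominated_linear_graph p {(x + t *\<^sub>R z, a + t * c) | x a t. (x, a) \<in> H}" (is "dominated_linear_graph p ?H'")
proof -
  note H0 = dominated_linear_graphD(1)[OF H] and H_add = dominated_linear_graphD(2)[OF H]
    and H_scale = dominated_linear_graphD(3)[OF H] and H_fun = dominated_linear_graphD(4)[OF H]
  have dom: "a + t * c \<le> p (x + t *\<^sub>R z)" if "(x, a) \<in> H" for x a t
  proof (cases t "0 :: real" rule: linorder_cases)
    case less
    have "(1 / - t) * a - p ((1 / - t) *\<^sub>R x - z) \<le> c" using c_lower H_scale[OF that] by blast
    then have "- t * ((1 / - t) * a - p ((1 / - t) *\<^sub>R x - z)) \<le> - t * c"
      using less by (intro mult_left_mono) auto
    moreover have "- t * p ((1 / - t) *\<^sub>R x - z) = p (x + t *\<^sub>R z)"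
      using p_scale[of "- t" "(1 / - t) *\<^sub>R x - z"] less by (simp add: scaleR_diff_right)
    ultimately show ?thesis using less by (simp add: right_diff_distrib)
  next
    case equal
    then show ?thesis using dominated_linear_graphD(5)[OF H] that by simp
  next
    case greater
    have "c \<le> p ((1 / t) *\<^sub>R x + z) - (1 / t) * a" using c_upper H_scale[OF that] by blast
    then have "t * c \<le> t * (p ((1 / t) *\<^sub>R x + z) - (1 / t) * a)"
      using greater by (intro mult_left_mono) auto
    moreover have "t * p ((1 / t) *\<^sub>R x + z) = p (x + t *\<^sub>R z)"
      using p_scale[of t "(1 / t) *\<^sub>R x + z"] greater by (simp add: scaleR_add_right)
    ultimately show ?thesis using greater by (simp add: right_diff_distrib)
  qed
  show ?thesis
    unfolding dominated_linear_graph_def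
  proof (intro conjI allI impI)
    show "(0, 0) \<in> ?H'" using H0 by force
  next
    fix x a y b assume "(x, a) \<in> ?H'" "(y, b) \<in> ?H'"
    then obtain x1 a1 t1 x2 a2 t2 where e: "x = x1 + t1 *\<^sub>R z" "a = a1 + t1 * c" "(x1, a1) \<in> H"
      "y = x2 + t2 *\<^sub>R z" "b = a2 + t2 * c" "(x2, a2) \<in> H" by blast
    have "x + y = (x1 + x2) + (t1 + t2) *\<^sub>R z" "a + b = (a1 + a2) + (t1 + t2) * c"
      using e by (simp_all add: algebra_simps)
    then show "(x + y, a + b) \<in> ?H'" using H_add[OF e(3) e(6)] by blast
  next
    fix x a t assume "(x, a) \<in> ?H'"
    then obtain x1 a1 t1 where e: "x = x1 + t1 *\<^sub>R z" "a = a1 + t1 * c" "(x1, a1) \<in> H" by blast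
    have "t *\<^sub>R x = t *\<^sub>R x1 + (t * t1) *\<^sub>R z" "t * a = t * a1 + (t * t1) * c"
      using e by (simp_all add: algebra_simps)
    then show "(t *\<^sub>R x, t * a) \<in> ?H'" using H_scale[OF e(3)] by blast
  next
    fix x a b assume "(x, a) \<in> ?H'" "(x, b) \<in> ?H'"
    then obtain x1 a1 t1 x2 a2 t2 where e: "x = x1 + t1 *\<^sub>R z" "a = a1 + t1 * c" "(x1, a1) \<in> H"
      "x = x2 + t2 *\<^sub>R z" "b = a2 + t2 * c" "(x2, a2) \<in> H" by blast
    have "t1 = t2"
    proof (rule ccontr)
      assume "t1 \<noteq> t2"
      have "((1 / (t2 - t1)) *\<^sub>R (x1 + (-1) *\<^sub>R x2), (1 / (t2 - t1)) * (a1 + (-1) * a2)) \<in> H"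
        using H_scale[OF H_add[OF e(3) H_scale[OF e(6)]]] .
      moreover have "x1 - x2 = (t2 - t1) *\<^sub>R z" using e(1,4) by (simp add: algebra_simps)
      ultimately show False using \<open>t1 \<noteq> t2\<close> z by auto
    qed
    then show "a = b" using e H_fun by auto
  next
    fix x a assume "(x, a) \<in> ?H'"
    then show "a \<le> p x" using dom by blast
  qed
qed

lemma dominated_linear_graph_extend:
  fixes p :: "'v::real_vector \<Rightarrow> real"
  assumes p_add: "\<And>x y. p (x + y) \<le> p x + p y"
    and p_scale: "\<And>t x. t \<ge> 0 \<Longrightarrow> p (t *\<^sub>R x) = t * p x"
    and H: "dominated_linear_graph p H" and z: "\<nexists>a. (z, a) \<in> H"
  obtains H' where "dominated_linear_graph p H'" "H \<subset> H'"
proof -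
  have sandwich: "a - p (x - z) \<le> p (x' + z) - a'" if "(x, a) \<in> H" "(x', a') \<in> H" for x a x' a'
  proof -
    have "a + a' \<le> p (x + x')" using dominated_linear_graphD(2,5)[OF H] that by blast
    also have "\<dots> \<le> p (x - z) + p (x' + z)" using p_add[of "x - z" "x' + z"] by simp
    finally show ?thesis by simp
  qed
  define c where "c = (SUP (x, a)\<in>H. a - p (x - z))"
  have bdd: "bdd_above ((\<lambda>(x, a). a - p (x - z)) ` H)"
    using sandwich dominated_linear_graphD(1)[OF H] by (auto intro!: bdd_aboveI2[where M = "p (0 + z) - 0"])
  have c_lower: "a - p (x - z) \<le> c" if "(x, a) \<in> H" for x a
    unfolding c_def using cSUP_upper[OF that bdd] by simp
  have c_upper: "c \<le> p (x + z) - a" if "(x, a) \<in> H" for x a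
    unfolding c_def using dominated_linear_graphD(1)[OF H] sandwich that by (intro cSUP_least) auto
  have "dominated_linear_graph p {(x + t *\<^sub>R z, a + t * c) | x a t. (x, a) \<in> H}"
    using dominated_linear_graph_extension[OF p_scale H z c_lower c_upper] .
  moreover have "H \<subset> {(x + t *\<^sub>R z, a + t * c) | x a t. (x, a) \<in> H}"
  proof
    show "H \<subseteq> {(x + t *\<^sub>R z, a + t * c) | x a t. (x, a) \<in> H}" by (force intro: exI[of _ 0])
    have "(0 + 1 *\<^sub>R z, 0 + 1 * c) \<in> {(x + t *\<^sub>R z, a + t * c) | x a t. (x, a) \<in> H}"
      using dominated_linear_graphD(1)[OF H] by blast
    then have "(z, c) \<in> {(x + t *\<^sub>R z, a + t * c) | x a t. (x, a) \<in> H}" by simp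
    then show "H \<noteq> {(x + t *\<^sub>R z, a + t * c) | x a t. (x, a) \<in> H}" using z by blast
  qed
  ultimately show ?thesis by (rule that)
qed

lemma dominated_linear_graph_total:
  fixes p :: "'v::real_vector \<Rightarrow> real"
  assumes p_add: "\<And>x y. p (x + y) \<le> p x + p y"
    and p_scale: "\<And>t x. t \<ge> 0 \<Longrightarrow> p (t *\<^sub>R x) = t * p x"
    and H0: "dominated_linear_graph p H0"
  obtains H where "dominated_linear_graph p H" "H0 \<subseteq> H" "\<And>z. \<exists>a. (z, a) \<in> H"
proof -
  define \<G> where "\<G> = {H. dominated_linear_graph p H \<and> H0 \<subseteq> H}"
  have "\<exists>H\<in>\<G>. \<forall>H'\<in>\<G>. H \<subseteq> H' \<longrightarrow> H' = H"
  proof (rule Zorn_Lemma2, intro ballI)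
    fix C assume C: "C \<in> chains \<G>"
    show "\<exists>U\<in>\<G>. \<forall>H\<in>C. H \<subseteq> U"
    proof (cases "C = {}")
      case True then show ?thesis using H0 unfolding \<G>_def by auto
    next
      case False
      then have "dominated_linear_graph p (\<Union>C)"
        using C by (intro dominated_linear_graph_Union) (auto simp: chains_def \<G>_def chain_subset_def)
      moreover have "H0 \<subseteq> \<Union>C" using False C unfolding chains_def \<G>_def by blast
      ultimately show ?thesis by (intro bexI[of _ "\<Union>C"]) (auto simp: \<G>_def)
    qed
  qed
  then obtain H where "H \<in> \<G>" and maximal: "\<And>H'. H' \<in> \<G> \<Longrightarrow> H \<subseteq> H' \<Longrightarrow> H' = H"
    by blast
  then have H: "dominated_linear_graph p H" "H0 \<subseteq> H" unfolding \<G>_def by auto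
  have "\<exists>a. (z, a) \<in> H" for z
  proof (rule ccontr)
    assume z: "\<nexists>a. (z, a) \<in> H"
    obtain H' where "dominated_linear_graph p H'" "H \<subset> H'"
      using dominated_linear_graph_extend[OF p_add p_scale H(1) z] by blast
    then show False using maximal[of H'] H(2) unfolding \<G>_def by blast
  qed
  with H show ?thesis by (rule that)
qed

theorem hahn_banach_sublinear:
  fixes p :: "'v::real_vector \<Rightarrow> real"
  assumes p_add: "\<And>x y. p (x + y) \<le> p x + p y"
    and p_scale: "\<And>t x. t \<ge> 0 \<Longrightarrow> p (t *\<^sub>R x) = t * p x"
  obtains F where "linear F" "\<And>x. F x \<le> p x" "F v = p v"
proof -
  obtain H where H: "dominated_linear_graph p H" "{(t *\<^sub>R v, t * p v) | t. True} \<subseteq> H"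
    and total: "\<And>z. \<exists>a. (z, a) \<in> H"
    using dominated_linear_graph_total[OF p_add p_scale dominated_linear_graph_line[OF p_add p_scale]]
    by blast
  define F where "F z = (THE a. (z, a) \<in> H)" for z
  have F_graph: "(z, F z) \<in> H" for z
  proof -
    obtain a where a: "(z, a) \<in> H" using total by blast
    then show ?thesis unfolding F_def
      by (rule theI) (use a dominated_linear_graphD(4)[OF H(1)] in blast)
  qed
  have F_eq: "(z, a) \<in> H \<Longrightarrow> F z = a" for z a
    using F_graph dominated_linear_graphD(4)[OF H(1)] by blast
  have "linear F"
    by (rule linearI) (auto intro!: F_eq F_graph dominated_linear_graphD(2,3)[OF H(1)])
  moreover have "F x \<le> p x" for x using F_graph dominated_linear_graphD(5)[OF H(1)] by blast
  moreover have "(1 *\<^sub>R v, 1 * p v) \<in> H" using H(2) by blast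
  then have "F v = p v" using F_eq by auto
  ultimately show ?thesis using that by blast
qed

section \<open>Distance to a convex cone\<close>

lemma convex_cone_iff_cone: "convex_cone S \<longleftrightarrow> S \<noteq> {} \<and> convex S \<and> cone S"
  unfolding convex_cone_def conic_def cone_def by blast

lemma infdist_lessE:
  assumes "infdist x S < d" "S \<noteq> {}"
  obtains a where "a \<in> S" "dist x a < d"
  using assms that by (auto simp: infdist_notempty cINF_less_iff)

lemma infdist_closure: "infdist x (closure S) = infdist x S"
  by (simp add: infdist_eq_setdist)

lemma infdist_convex_cone_add:
  fixes C :: "'b::real_normed_vector set"
  assumes "convex_cone C"
  shows "infdist (x + y) C \<le> infdist x C + infdist y C"
proof (rule field_le_epsilon)
  fix e :: real assume "e > 0"
  have "C \<noteq> {}" using assms by (rule convex_cone_nonempty)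
  then obtain c d where "c \<in> C" "dist x c < infdist x C + e / 2" "d \<in> C" "dist y d < infdist y C + e / 2"
    using infdist_lessE[of x C] infdist_lessE[of y C] \<open>e > 0\<close> by (metis less_add_same_cancel1 half_gt_zero)
  moreover have "infdist (x + y) C \<le> dist (x + y) (c + d)"
    using convex_cone_add[OF assms \<open>c \<in> C\<close> \<open>d \<in> C\<close>] by (rule infdist_le)
  moreover have "dist (x + y) (c + d) \<le> dist x c + dist y d"
    using norm_triangle_ineq[of "x - c" "y - d"] by (simp add: dist_norm algebra_simps)
  ultimately show "infdist (x + y) C \<le> infdist x C + infdist y C + e" by simp
qed

lemma infdist_convex_cone_scaleR:
  fixes C :: "'b::real_normed_vector set"
  assumes C: "convex_cone C" and t: "0 \<le> t"
  shows "infdist (t *\<^sub>R x) C = t * infdist x C"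
proof -
  have le: "infdist (s *\<^sub>R y) C \<le> s * infdist y C" if s: "0 < s" for s y
  proof -
    have "infdist (s *\<^sub>R y) C / s \<le> dist y c" if "c \<in> C" for c
    proof -
      have "infdist (s *\<^sub>R y) C \<le> dist (s *\<^sub>R y) (s *\<^sub>R c)"
        using convex_cone_scaleR[OF C _ that] s by (intro infdist_le) simp
      also have "\<dots> = s * dist y c" using s by (simp add: dist_norm scaleR_diff_right[symmetric])
      finally show ?thesis using s by (simp add: divide_le_eq mult.commute)
    qed
    then have "infdist (s *\<^sub>R y) C / s \<le> infdist y C"
      using convex_cone_nonempty[OF C] by (simp add: infdist_notempty cINF_greatest)
    then show ?thesis using s by (simp add: divide_le_eq mult.commute)
  qed
  show ?thesis
  proof (cases "t = 0")
    case True
    then show ?thesis using convex_cone_contains_0[OF C] by simp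
  next
    case False
    then have "t > 0" using t by simp
    have "infdist x C = infdist ((1 / t) *\<^sub>R (t *\<^sub>R x)) C" using \<open>t > 0\<close> by simp
    also have "\<dots> \<le> (1 / t) * infdist (t *\<^sub>R x) C" using \<open>t > 0\<close> by (intro le) simp
    finally have "t * infdist x C \<le> infdist (t *\<^sub>R x) C" using \<open>t > 0\<close> by (simp add: field_simps)
    then show ?thesis using le[OF \<open>t > 0\<close>, of x] by linarith
  qed
qed

text \<open>Hahn-Banach applied to the sublinear functional \<open>infdist \<cdot> C\<close>.\<close>

lemma convex_cone_infdist_functional:
  fixes C :: "'b::real_normed_vector set"
  assumes C: "convex_cone C"
  obtains \<eta> :: "'b \<Rightarrow>\<^sub>L real" where "norm \<eta> \<le> 1" "\<And>c. c \<in> C \<Longrightarrow> \<eta> c \<le> 0" "\<eta> v = infdist v C"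
proof -
  obtain F where F: "linear F" "\<And>x. F x \<le> infdist x C" "F v = infdist v C"
    using hahn_banach_sublinear[of "\<lambda>x. infdist x C"]
      infdist_convex_cone_add[OF C] infdist_convex_cone_scaleR[OF C] by metis
  have infdist_le_norm: "infdist x C \<le> norm x" for x
    using infdist_le[OF convex_cone_contains_0[OF C], of x] by simp
  have F_bound: "norm (F x) \<le> norm x" for x
  proof -
    have "F x \<le> norm x" using F(2)[of x] infdist_le_norm[of x] by linarith
    moreover have "- F x \<le> norm x"
      using F(2)[of "- x"] infdist_le_norm[of "- x"] linear_neg[OF F(1), of x] by simp
    ultimately show ?thesis by (simp add: abs_le_iff)
  qed
  have "bounded_linear F"
    using F(1) F_bound by (auto intro!: bounded_linear_intro[where K = 1] simp: linear_add linear_scale)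
  then have F_apply: "blinfun_apply (Blinfun F) = F" by (rule bounded_linear_Blinfun_apply)
  show ?thesis
  proof (rule that[of "Blinfun F"])
    show "norm (Blinfun F) \<le> 1" by (rule norm_blinfun_bound) (use F_bound in \<open>simp_all add: F_apply\<close>)
    show "Blinfun F c \<le> 0" if "c \<in> C" for c using F(2)[of c] that by (simp add: F_apply)
    show "Blinfun F v = infdist v C" using F(3) by (simp add: F_apply)
  qed
qed

lemma blinfun_le_infdist:
  fixes \<eta> :: "'b::real_normed_vector \<Rightarrow>\<^sub>L real"
  assumes "C \<noteq> {}" "norm \<eta> \<le> 1" "\<And>c. c \<in> C \<Longrightarrow> \<eta> c \<le> 0"
  shows "\<eta> v \<le> infdist v C"
proof -
  have "\<eta> v \<le> dist v c" if "c \<in> C" for c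
  proof -
    have "\<eta> v = \<eta> (v - c) + \<eta> c" by (simp add: blinfun.diff_right)
    also have "\<eta> (v - c) \<le> norm \<eta> * norm (v - c)" using norm_blinfun[of \<eta> "v - c"] by simp
    also have "\<dots> \<le> norm (v - c)" using assms(2) by (simp add: mult_left_le_one_le)
    finally show ?thesis using assms(3)[OF that] by (simp add: dist_norm)
  qed
  then show ?thesis using assms(1) by (simp add: infdist_notempty cINF_greatest)
qed

section \<open>Tangent and normal cones of convex sets\<close>

definition radial_cone :: "'a::real_vector set \<Rightarrow> 'a \<Rightarrow> 'a set" where
  "radial_cone C x = cone hull ((\<lambda>c. c - x) ` C)"

lemma radial_coneI: "c \<in> C \<Longrightarrow> 0 \<le> t \<Longrightarrow> t *\<^sub>R (c - x) \<in> radial_cone C x"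
  unfolding radial_cone_def by (rule mem_cone_hull) auto

lemma radial_coneE:
  assumes "w \<in> radial_cone C x"
  obtains t c where "w = t *\<^sub>R (c - x)" "0 \<le> t" "c \<in> C"
  using assms unfolding radial_cone_def cone_hull_expl by blast

lemma convex_cone_radial_cone: "convex C \<Longrightarrow> x \<in> C \<Longrightarrow> convex_cone (radial_cone C x)"
  unfolding convex_cone_iff_cone radial_cone_def
  by (auto simp: cone_hull_empty_iff[symmetric] intro: convex_cone_hull cone_cone_hull)

lemma contingent_cone_convex:
  fixes C :: "'a::real_normed_vector set"
  assumes C: "convex C" "x \<in> C"
  shows "contingent_cone C x = closure (radial_cone C x)"
proof
  show "contingent_cone C x \<subseteq> closure (radial_cone C x)"
  proof
    fix h assume "h \<in> contingent_cone C x"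
    then obtain \<alpha> :: "nat \<Rightarrow> real" and hs where
      h: "\<forall>n. \<alpha> n > 0" "hs \<longlonglongrightarrow> h" "\<forall>n. x + \<alpha> n *\<^sub>R hs n \<in> C"
      unfolding contingent_cone_def by blast
    have "hs n \<in> radial_cone C x" for n
    proof -
      have "(1 / \<alpha> n) *\<^sub>R ((x + \<alpha> n *\<^sub>R hs n) - x) \<in> radial_cone C x"
        using h(1) by (intro radial_coneI[OF h(3)[rule_format]]) (simp add: less_imp_le)
      then show ?thesis using h(1)[rule_format, of n] by simp
    qed
    then show "h \<in> closure (radial_cone C x)" using h(2) closure_sequential by blast
  qed
next
  show "closure (radial_cone C x) \<subseteq> contingent_cone C x"
  proof
    fix h assume "h \<in> closure (radial_cone C x)"
    then obtain w where w: "\<And>n. w n \<in> radial_cone C x" "w \<longlonglongrightarrow> h" using closure_sequential by blast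
    have "\<forall>n. \<exists>t c. w n = t *\<^sub>R (c - x) \<and> 0 \<le> t \<and> c \<in> C"
      using w(1) unfolding radial_cone_def cone_hull_expl by blast
    then obtain t c where tc: "\<And>n. w n = t n *\<^sub>R (c n - x)" "\<And>n. 0 \<le> t n" "\<And>n. c n \<in> C"
      by metis
    define \<alpha> where "\<alpha> n = inverse (real (Suc n)) * inverse (t n + 1)" for n
    have \<alpha>_pos: "\<alpha> n > 0" for n unfolding \<alpha>_def using tc(2)[of n] by (simp add: add_nonneg_pos)
    have "\<alpha> n \<le> inverse (real (Suc n))" for n
      using tc(2)[of n] unfolding \<alpha>_def by (simp add: mult_left_le inverse_le_1_iff)
    then have "\<alpha> \<longlonglongrightarrow> 0"
      using \<alpha>_pos by (intro Lim_null_comparison[OF _ LIMSEQ_inverse_real_of_nat]) (simp add: less_imp_le)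
    moreover have "x + \<alpha> n *\<^sub>R w n \<in> C" for n
    proof -
      have step: "0 \<le> \<alpha> n * t n" "\<alpha> n * t n \<le> 1"
        using \<alpha>_pos[of n] tc(2)[of n] unfolding \<alpha>_def
        by (auto simp: field_simps intro!: mult_le_one)
      have "x + \<alpha> n *\<^sub>R w n = (1 - \<alpha> n * t n) *\<^sub>R x + (\<alpha> n * t n) *\<^sub>R c n"
        unfolding tc(1) by (simp add: algebra_simps)
      also have "\<dots> \<in> C" using C tc(3) step by (intro convexD) auto
      finally show ?thesis .
    qed
    ultimately show "h \<in> contingent_cone C x" unfolding contingent_cone_def using \<alpha>_pos w(2) by blast
  qed
qed

lemma convex_cone_contingent_cone:
  fixes C :: "'a::real_normed_vector set"
  shows "convex C \<Longrightarrow> x \<in> C \<Longrightarrow> convex_cone (contingent_cone C x)"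
  using convex_cone_radial_cone[of C x]
  by (auto simp: contingent_cone_convex convex_cone_iff_cone intro: convex_closure cone_closure)

lemma infdist_contingent_cone:
  "convex C \<Longrightarrow> x \<in> C \<Longrightarrow> infdist v (contingent_cone C x) = infdist v (radial_cone C x)"
  by (simp add: contingent_cone_convex infdist_closure)

lemma polar_separation:
  fixes T :: "'a::euclidean_space set"
  assumes T: "closed T" "convex_cone T" and h: "h \<notin> T"
  obtains n where "\<And>v. v \<in> T \<Longrightarrow> n \<bullet> v \<le> 0" "0 < n \<bullet> h"
proof -
  obtain a b where ab: "a \<bullet> h < b" "\<And>v. v \<in> T \<Longrightarrow> b < a \<bullet> v"
    using separating_hyperplane_closed_point[OF _ T(1) h] T(2) by (auto simp: convex_cone_def)
  have "b < 0" using ab(2)[OF convex_cone_contains_0[OF T(2)]] by simp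
  have "0 \<le> a \<bullet> v" if v: "v \<in> T" for v
  proof (rule ccontr)
    assume neg: "\<not> 0 \<le> a \<bullet> v"
    have "b < a \<bullet> ((b / (a \<bullet> v)) *\<^sub>R v)"
      using \<open>b < 0\<close> neg by (intro ab(2) convex_cone_scaleR[OF T(2) _ v]) (simp add: divide_nonpos_neg)
    then show False using neg by simp
  qed
  then show ?thesis using that[of "- a"] ab(1) \<open>b < 0\<close> by simp
qed

lemma closed_convex_mem_0_of_support:
  fixes S :: "'a::euclidean_space set"
  assumes "closed S" "convex S" and support: "\<And>h. \<exists>x\<in>S. 0 \<le> x \<bullet> h"
  shows "0 \<in> S"
proof (rule ccontr)
  assume "0 \<notin> S"
  then obtain a b where "0 < b" "\<And>x. x \<in> S \<Longrightarrow> b < a \<bullet> x"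
    using separating_hyperplane_closed_0[OF assms(2,1)] by blast
  moreover obtain x where "x \<in> S" "0 \<le> x \<bullet> - a" using support by blast
  ultimately show False using inner_commute[of a x] by force
qed

lemma convex_interior_mem_0_of_support:
  fixes S :: "'a::euclidean_space set"
  assumes S: "convex S" and "0 < \<delta>" and support: "\<And>h. norm h = 1 \<Longrightarrow> \<exists>x\<in>S. \<delta> \<le> x \<bullet> h"
  shows "0 \<in> interior S"
proof -
  have "ball 0 \<delta> \<subseteq> closure S"
  proof
    fix z :: 'a assume z: "z \<in> ball 0 \<delta>"
    show "z \<in> closure S"
    proof (rule ccontr)
      assume "z \<notin> closure S"
      then obtain a b where ab: "a \<bullet> z < b" "\<And>x. x \<in> closure S \<Longrightarrow> b < a \<bullet> x"
        using separating_hyperplane_closed_point[OF convex_closure[OF S] closed_closure] by blast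
      define u where "u = - (1 / norm a) *\<^sub>R a"
      obtain e :: 'a where "e \<in> Basis" using nonempty_Basis by blast
      then obtain x0 where "x0 \<in> S" using support[of e] by auto
      then have "b < a \<bullet> x0" using ab(2) closure_subset by blast
      then have "a \<noteq> 0" using ab(1) by auto
      then have "norm u = 1" unfolding u_def by simp
      then obtain x where x: "x \<in> S" "\<delta> \<le> x \<bullet> u" using support by blast
      have "a \<bullet> z < a \<bullet> x" using ab(1) ab(2)[of x] x(1) closure_subset by force
      then have "x \<bullet> u < z \<bullet> u" using \<open>a \<noteq> 0\<close> unfolding u_def by (simp add: inner_commute divide_less_cancel)
      also have "\<dots> \<le> norm z" using Cauchy_Schwarz_ineq2[of z u] \<open>norm u = 1\<close> by simp
      finally show False using x(2) z by simp
    qed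
  qed
  then have "ball 0 \<delta> \<subseteq> interior (closure S)" by (rule interior_maximal) simp
  then have "0 \<in> interior (closure S)" using \<open>0 < \<delta>\<close> by auto
  then show ?thesis using convex_interior_closure[OF S] by simp
qed

lemma infdist_contingent_cone_le:
  assumes "convex K" "y \<in> K"
  shows "infdist v (contingent_cone K y) \<le> infdist (y + v) K"
proof -
  have "infdist v (radial_cone K y) \<le> dist (y + v) k" if "k \<in> K" for k
    using infdist_le[OF radial_coneI[OF that, of 1 y], of v] by (simp add: dist_norm algebra_simps)
  moreover have "K \<noteq> {}" using assms(2) by blast
  ultimately show ?thesis
    using assms by (auto simp: infdist_contingent_cone infdist_notempty intro!: cINF_greatest)
qed

text \<open>Approximate \<open>v\<close> by a radial direction \<open>\<tau> (k - y)\<close>, along which one stays in \<open>K\<close> for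
  \<open>t \<tau> \<le> 1\<close>.\<close>

lemma infdist_convex_dir_upper:
  fixes K :: "'b::real_normed_vector set"
  assumes K: "convex K" "y \<in> K" and e: "0 < e"
  obtains d where "0 < d" "\<And>t. 0 < t \<Longrightarrow> t < d \<Longrightarrow>
    infdist (y + t *\<^sub>R v) K \<le> t * (infdist v (contingent_cone K y) + e)"
proof -
  obtain w where w: "w \<in> radial_cone K y" "dist v w < infdist v (radial_cone K y) + e"
    using infdist_lessE[of v "radial_cone K y" "infdist v (radial_cone K y) + e"] e
      convex_cone_nonempty[OF convex_cone_radial_cone[OF K]] by auto
  obtain \<tau> k where \<tau>k: "w = \<tau> *\<^sub>R (k - y)" "0 \<le> \<tau>" "k \<in> K" using w(1) by (rule radial_coneE)
  have "infdist (y + t *\<^sub>R v) K \<le> t * (infdist v (contingent_cone K y) + e)"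
    if t: "0 < t" "t < 1 / (\<tau> + 1)" for t
  proof -
    have "t * \<tau> \<le> 1" using t \<tau>k(2) by (simp add: field_simps)
    then have "(1 - t * \<tau>) *\<^sub>R y + (t * \<tau>) *\<^sub>R k \<in> K"
      using K \<tau>k t by (intro convexD) auto
    moreover have "(1 - t * \<tau>) *\<^sub>R y + (t * \<tau>) *\<^sub>R k = y + t *\<^sub>R w" by (simp add: \<tau>k(1) algebra_simps)
    ultimately have "infdist (y + t *\<^sub>R v) K \<le> dist (y + t *\<^sub>R v) (y + t *\<^sub>R w)" by (metis infdist_le)
    also have "\<dots> = t * dist v w" using t by (simp add: dist_norm scaleR_diff_right[symmetric])
    also have "\<dots> \<le> t * (infdist v (contingent_cone K y) + e)"
      using w(2) t K by (simp add: infdist_contingent_cone)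
    finally show ?thesis .
  qed
  moreover have "0 < 1 / (\<tau> + 1)" using \<tau>k(2) by simp
  ultimately show ?thesis using that by blast
qed

lemma diff_in_contingent_cone: "convex A \<Longrightarrow> x \<in> A \<Longrightarrow> a \<in> A \<Longrightarrow> a - x \<in> contingent_cone A x"
  using radial_coneI[of a A 1 x] closure_subset by (force simp: contingent_cone_convex)

lemma normal_cone_inner_le: "n \<in> normal_cone A x \<Longrightarrow> v \<in> contingent_cone A x \<Longrightarrow> n \<bullet> v \<le> 0"
  unfolding normal_cone_def by auto

lemma zero_in_normal_cone: "0 \<in> normal_cone A x"
  unfolding normal_cone_def by simp

lemma closed_normal_cone: "closed (normal_cone A x)"
proof -
  have "normal_cone A x = (\<Inter>v\<in>contingent_cone A x. {z. v \<bullet> z \<le> 0})"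
    unfolding normal_cone_def by (auto simp: inner_commute)
  then show ?thesis by (simp add: closed_INT closed_halfspace_le)
qed

lemma convex_normal_cone: "convex (normal_cone A x)"
  unfolding normal_cone_def
  by (rule convexI) (auto simp: inner_add_left add_nonpos_nonpos mult_nonneg_nonpos)

lemma normal_cone_unbounded:
  assumes "convex A" "x \<in> A" "h \<notin> contingent_cone A x"
  obtains n where "n \<in> normal_cone A x" "\<beta> \<le> n \<bullet> h"
proof -
  have "closed (contingent_cone A x)" by (simp add: contingent_cone_convex assms)
  then obtain n where n: "\<And>v. v \<in> contingent_cone A x \<Longrightarrow> n \<bullet> v \<le> 0" "0 < n \<bullet> h"
    using polar_separation convex_cone_contingent_cone assms by metis
  define t where "t = max 0 (\<beta> / (n \<bullet> h))"
  have "t *\<^sub>R n \<in> normal_cone A x"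
    using n(1) unfolding normal_cone_def t_def by (auto intro: mult_nonneg_nonpos)
  moreover have "\<beta> \<le> (t *\<^sub>R n) \<bullet> h"
    using n(2) unfolding t_def by (simp add: divide_le_eq max_mult_distrib_right)
  ultimately show ?thesis using that by blast
qed

section \<open>Uniform estimates, an iteration scheme and exact penalties\<close>

lemma uniformly_continuous_at_compact_parameter:
  fixes g :: "'a::metric_space \<Rightarrow> 'w::topological_space \<Rightarrow> 'c::metric_space"
  assumes cont: "continuous_on (UNIV \<times> W) (\<lambda>p. g (fst p) (snd p))" and W: "compact W" and e: "0 < e"
  obtains d where "0 < d" "\<And>x \<omega>. dist x x0 < d \<Longrightarrow> \<omega> \<in> W \<Longrightarrow> dist (g x \<omega>) (g x0 \<omega>) < e"
proof -
  have "\<exists>r>0. \<exists>V. open V \<and> \<omega> \<in> V \<and>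
          (\<forall>x \<omega>'. dist x x0 < r \<longrightarrow> \<omega>' \<in> V \<inter> W \<longrightarrow> dist (g x \<omega>') (g x0 \<omega>) < e / 2)"
    if \<omega>: "\<omega> \<in> W" for \<omega>
  proof -
    obtain N where N: "open N" "(x0, \<omega>) \<in> N"
      "\<And>p. p \<in> UNIV \<times> W \<Longrightarrow> p \<in> N \<Longrightarrow> g (fst p) (snd p) \<in> ball (g x0 \<omega>) (e / 2)"
      using cont[unfolded continuous_on_topological, rule_format, of "(x0, \<omega>)" "ball (g x0 \<omega>) (e / 2)"] \<omega> e
      by auto
    obtain U V where UV: "open U" "open V" "(x0, \<omega>) \<in> U \<times> V" "U \<times> V \<subseteq> N"
      using open_prod_elim[OF N(1,2)] by blast
    obtain r where r: "0 < r" "ball x0 r \<subseteq> U" using UV(1,3) open_contains_ball by blast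
    have "dist (g x \<omega>') (g x0 \<omega>) < e / 2" if "dist x x0 < r" "\<omega>' \<in> V \<inter> W" for x \<omega>'
    proof -
      have "(x, \<omega>') \<in> N" using r UV that by (auto simp: dist_commute)
      then show ?thesis using N(3)[of "(x, \<omega>')"] that by (simp add: dist_commute)
    qed
    then show ?thesis using r UV by blast
  qed
  then obtain r V where rV: "\<And>\<omega>. \<omega> \<in> W \<Longrightarrow> 0 < r \<omega> \<and> open (V \<omega>) \<and> \<omega> \<in> V \<omega> \<and>
      (\<forall>x \<omega>'. dist x x0 < r \<omega> \<longrightarrow> \<omega>' \<in> V \<omega> \<inter> W \<longrightarrow> dist (g x \<omega>') (g x0 \<omega>) < e / 2)"
    by metis
  obtain F where F: "F \<subseteq> W" "finite F" "W \<subseteq> (\<Union>\<omega>\<in>F. V \<omega>)"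
    using compactE_image[OF W, of W V] rV by blast
  define d where "d = Min (insert 1 (r ` F))"
  have "0 < d" unfolding d_def using F rV by (subst Min_gr_iff) auto
  moreover have "dist (g x \<omega>) (g x0 \<omega>) < e" if x\<omega>: "dist x x0 < d" "\<omega> \<in> W" for x \<omega>
  proof -
    obtain \<omega>' where \<omega>': "\<omega>' \<in> F" "\<omega> \<in> V \<omega>'" using F x\<omega>(2) by blast
    have "d \<le> r \<omega>'" unfolding d_def using F \<omega>'(1) by (intro Min_le) auto
    then have "dist (g x \<omega>) (g x0 \<omega>') < e / 2" "dist (g x0 \<omega>) (g x0 \<omega>') < e / 2"
      using rV[of \<omega>'] F \<omega>' x\<omega> by (auto dest!: spec[of _ x0])
    then show ?thesis using dist_triangle2[of "g x \<omega>" "g x0 \<omega>" "g x0 \<omega>'"] by simp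
  qed
  ultimately show ?thesis using that by blast
qed

lemma continuous_derivative_strict_estimate:
  fixes G :: "'a::real_normed_vector \<Rightarrow> 'b::real_normed_vector"
  assumes G: "\<And>x. (G has_derivative blinfun_apply (DG x)) (at x)" and DG: "isCont DG x0" and e: "0 < e"
  obtains d where "0 < d"
    "\<And>x x'. x \<in> ball x0 d \<Longrightarrow> x' \<in> ball x0 d \<Longrightarrow> norm (G x' - G x - DG x0 (x' - x)) \<le> e * norm (x' - x)"
proof -
  obtain d where d: "0 < d" "\<And>y. dist y x0 < d \<Longrightarrow> dist (DG y) (DG x0) < e"
    using DG e unfolding continuous_at_eps_delta by blast
  have "norm (G x' - G x - DG x0 (x' - x)) \<le> e * norm (x' - x)"
    if "x \<in> ball x0 d" "x' \<in> ball x0 d" for x x'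
  proof -
    have "onorm (blinfun_apply (DG y) - blinfun_apply (DG x0)) \<le> e" if "y \<in> ball x0 d" for y
    proof -
      have "blinfun_apply (DG y) - blinfun_apply (DG x0) = blinfun_apply (DG y - DG x0)"
        by (simp add: fun_eq_iff blinfun.diff_left)
      then show ?thesis
        using d(2)[of y] that by (auto simp: dist_norm norm_blinfun.rep_eq[symmetric] norm_minus_commute)
    qed
    then have "norm (G x' - G x - DG x0 (x' - x)) \<le> norm (x' - x) * e"
    proof (intro differentiable_bound_linearization[where f' = "\<lambda>y. blinfun_apply (DG y)"])
      fix t :: real assume "t \<in> {0..1}"
      then have "(1 - t) *\<^sub>R x + t *\<^sub>R x' \<in> ball x0 d"
        using that convex_ball[of x0 d, unfolded convex_alt] by auto
      then show "x + t *\<^sub>R (x' - x) \<in> ball x0 d" by (simp add: algebra_simps)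
    qed (use G d(1) in \<open>auto intro: has_derivative_at_withinI\<close>)
    then show ?thesis by (simp add: mult.commute)
  qed
  then show ?thesis using that d(1) by blast
qed

lemma convergent_geometric_increments:
  fixes x :: "nat \<Rightarrow> 'b::banach"
  assumes incr: "\<And>n. norm (x (Suc n) - x n) \<le> C * q ^ n" and q: "0 \<le> q" "q < 1"
  shows "convergent x"
proof -
  have "summable (\<lambda>n. C * q ^ n)" using q by (intro summable_mult summable_geometric) simp
  moreover have "norm (norm (x (Suc n) - x n)) \<le> C * q ^ n" for n using incr[of n] by simp
  ultimately have "summable (\<lambda>n. norm (x (Suc n) - x n))" by (rule summable_comparison_test')
  then have "summable (\<lambda>n. x (Suc n) - x n)" by (rule summable_norm_cancel)
  then have "convergent (\<lambda>n. x 0 + (\<Sum>i<n. x (Suc i) - x i))"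
    by (intro convergent_add convergent_const) (simp add: summable_iff_convergent)
  then show ?thesis by (simp add: sum_lessThan_telescope)
qed

text \<open>An abstract Newton-type scheme: the step lengths form a geometric series, so the iterates
  stay within \<open>2 \<kappa> \<rho> p0\<close> of \<open>p0\<close> and converge to a zero of \<open>\<rho>\<close>.\<close>

lemma residual_iteration_sequence:
  fixes \<rho> :: "'x::real_normed_vector \<Rightarrow> real"
  assumes nonneg: "\<And>p. p \<in> S \<Longrightarrow> 0 \<le> \<rho> p"
    and p0: "p0 \<in> S" "2 * \<kappa> * \<rho> p0 \<le> R" and \<kappa>: "0 \<le> \<kappa>"
    and step: "\<And>p. p \<in> S \<Longrightarrow> norm (p - p0) \<le> R \<Longrightarrow> \<rho> p \<le> \<rho> p0 \<Longrightarrow>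
      \<exists>p'\<in>S. norm (p' - p) \<le> \<kappa> * \<rho> p \<and> \<rho> p' \<le> \<rho> p / 2"
  obtains seq where "\<And>n. seq n \<in> S" "\<And>n. \<rho> (seq n) \<le> \<rho> p0 * (1 / 2) ^ n"
    "\<And>n. norm (seq (Suc n) - seq n) \<le> \<kappa> * \<rho> p0 * (1 / 2) ^ n" "\<And>n. norm (seq n - p0) \<le> 2 * \<kappa> * \<rho> p0"
proof -
  define nxt where "nxt p = (SOME p'. p' \<in> S \<and> norm (p' - p) \<le> \<kappa> * \<rho> p \<and> \<rho> p' \<le> \<rho> p / 2)" for p
  define seq where "seq n = (nxt ^^ n) p0" for n
  define \<rho>0 where "\<rho>0 = \<rho> p0"
  define q :: "nat \<Rightarrow> real" where "q n = (1 / 2) ^ n" for n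
  have q: "0 \<le> q n" "q n \<le> 1" "q (Suc n) = q n / 2" for n by (simp_all add: q_def power_le_one)
  have \<rho>0: "0 \<le> \<rho>0" using nonneg[OF p0(1)] by (simp add: \<rho>0_def)
  define Inv where "Inv n \<longleftrightarrow> seq n \<in> S \<and> \<rho> (seq n) \<le> \<rho>0 * q n \<and> norm (seq n - p0) \<le> 2 * \<kappa> * \<rho>0 * (1 - q n)"
    for n
  have bound: "2 * \<kappa> * \<rho>0 * (1 - q n) \<le> 2 * \<kappa> * \<rho>0" for n using \<kappa> \<rho>0 q[of n] by (simp add: mult_left_le)
  have next_step: "seq (Suc n) \<in> S \<and> norm (seq (Suc n) - seq n) \<le> \<kappa> * \<rho> (seq n) \<and> \<rho> (seq (Suc n)) \<le> \<rho> (seq n) / 2"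
    if inv: "Inv n" for n
  proof -
    have "\<rho>0 * q n \<le> \<rho>0" using \<rho>0 q[of n] by (simp add: mult_left_le)
    then have "norm (seq n - p0) \<le> R" "\<rho> (seq n) \<le> \<rho> p0"
      using inv p0(2) bound[of n] unfolding Inv_def \<rho>0_def by linarith+
    then obtain p' where "p' \<in> S \<and> norm (p' - seq n) \<le> \<kappa> * \<rho> (seq n) \<and> \<rho> p' \<le> \<rho> (seq n) / 2"
      using step[of "seq n"] inv unfolding Inv_def by blast
    then have "nxt (seq n) \<in> S \<and> norm (nxt (seq n) - seq n) \<le> \<kappa> * \<rho> (seq n) \<and> \<rho> (nxt (seq n)) \<le> \<rho> (seq n) / 2"
      unfolding nxt_def by (rule someI)
    then show ?thesis by (simp add: seq_def)
  qed
  have Inv: "Inv n" for n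
  proof (induction n)
    case 0
    then show ?case using p0(1) by (simp add: Inv_def seq_def q_def \<rho>0_def)
  next
    case (Suc n)
    note step_n = next_step[OF Suc]
    have "norm (seq (Suc n) - p0) \<le> norm (seq (Suc n) - seq n) + norm (seq n - p0)"
      using norm_triangle_ineq[of "seq (Suc n) - seq n" "seq n - p0"] by simp
    also have "\<dots> \<le> \<kappa> * (\<rho>0 * q n) + 2 * \<kappa> * \<rho>0 * (1 - q n)"
      using Suc step_n \<kappa> unfolding Inv_def by (meson add_mono mult_left_mono order_trans)
    also have "\<dots> = 2 * \<kappa> * \<rho>0 * (1 - q (Suc n))" using q(3)[of n] by (simp add: field_simps)
    finally have "norm (seq (Suc n) - p0) \<le> 2 * \<kappa> * \<rho>0 * (1 - q (Suc n))" .
    moreover have "\<rho> (seq (Suc n)) \<le> \<rho>0 * q (Suc n)"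
    proof -
      have "\<rho> (seq (Suc n)) \<le> \<rho> (seq n) / 2" using step_n by simp
      also have "\<dots> \<le> \<rho>0 * q n / 2" using Suc unfolding Inv_def by simp
      also have "\<dots> = \<rho>0 * q (Suc n)" by (simp add: q(3))
      finally show ?thesis .
    qed
    ultimately show ?case using step_n unfolding Inv_def by blast
  qed
  have "norm (seq (Suc n) - seq n) \<le> \<kappa> * \<rho>0 * (1 / 2) ^ n" for n
    using next_step[OF Inv[of n]] Inv[of n] \<kappa> unfolding Inv_def q_def
    by (metis (no_types, opaque_lifting) mult.assoc mult_left_mono order_trans)
  moreover have "norm (seq n - p0) \<le> 2 * \<kappa> * \<rho>0" for n using Inv[of n] bound[of n] unfolding Inv_def by linarith
  ultimately show ?thesis using that Inv unfolding Inv_def q_def \<rho>0_def by blast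
qed

lemma residual_iteration_zero:
  fixes \<rho> :: "'x::banach \<Rightarrow> real"
  assumes S: "closed S" "continuous_on S \<rho>" "\<And>p. p \<in> S \<Longrightarrow> 0 \<le> \<rho> p"
    and p0: "p0 \<in> S" "2 * \<kappa> * \<rho> p0 \<le> R" and \<kappa>: "0 \<le> \<kappa>"
    and step: "\<And>p. p \<in> S \<Longrightarrow> norm (p - p0) \<le> R \<Longrightarrow> \<rho> p \<le> \<rho> p0 \<Longrightarrow>
      \<exists>p'\<in>S. norm (p' - p) \<le> \<kappa> * \<rho> p \<and> \<rho> p' \<le> \<rho> p / 2"
  obtains p where "p \<in> S" "\<rho> p = 0" "norm (p - p0) \<le> 2 * \<kappa> * \<rho> p0"
proof -
  obtain seq where seq: "\<And>n. seq n \<in> S" "\<And>n. \<rho> (seq n) \<le> \<rho> p0 * (1 / 2) ^ n"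
    "\<And>n. norm (seq (Suc n) - seq n) \<le> \<kappa> * \<rho> p0 * (1 / 2) ^ n" "\<And>n. norm (seq n - p0) \<le> 2 * \<kappa> * \<rho> p0"
    using residual_iteration_sequence[OF S(3) p0 \<kappa> step] by blast
  obtain p where lim: "seq \<longlonglongrightarrow> p"
    using convergent_geometric_increments[OF seq(3)] unfolding convergent_def by force
  have "p \<in> S" using closed_sequentially[OF S(1) _ lim] seq(1) by blast
  moreover have "\<rho> p \<le> 0"
  proof (rule LIMSEQ_le[OF continuous_on_tendsto_compose[OF S(2) lim \<open>p \<in> S\<close>]])
    show "(\<lambda>n. \<rho> p0 * (1 / 2) ^ n) \<longlonglongrightarrow> 0" by (intro tendsto_mult_right_zero LIMSEQ_power_zero) simp
  qed (use seq in auto)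
  moreover have "norm (p - p0) \<le> 2 * \<kappa> * \<rho> p0"
  proof (rule Lim_norm_ubound[OF trivial_limit_sequentially])
    show "(\<lambda>n. seq n - p0) \<longlonglongrightarrow> p - p0" using lim by (intro tendsto_intros)
  qed (use seq(4) in simp)
  ultimately show ?thesis using that S(3) by force
qed

lemma convex_ball_shrink_0:
  fixes S :: "'b::real_normed_vector set"
  assumes S: "convex S" "ball p s \<subseteq> S" "- t *\<^sub>R p \<in> S" and t: "0 < t"
  shows "ball 0 (t * s / (1 + t)) \<subseteq> S"
proof
  fix z :: 'b assume z: "z \<in> ball 0 (t * s / (1 + t))"
  define q where "q = p + ((1 + t) / t) *\<^sub>R z"
  have "norm (((1 + t) / t) *\<^sub>R z) < s"
    using z t by (simp add: field_simps)
  then have "q \<in> S" using S(2) unfolding q_def by (auto simp: dist_norm)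
  have "0 < t + t * t" using t by (intro add_pos_pos mult_pos_pos)
  then have "t + t * t \<noteq> 0" by simp
  then have "z = (1 / (1 + t)) *\<^sub>R (- t *\<^sub>R p) + (t / (1 + t)) *\<^sub>R q"
    unfolding q_def using t by (simp add: algebra_simps divide_simps)
  also have "\<dots> \<in> S" using S(1,3) \<open>q \<in> S\<close> t by (intro convexD) (auto simp: divide_simps)
  finally show "z \<in> S" .
qed

definition local_error_bound :: "'a::real_normed_vector set \<Rightarrow> 'a set \<Rightarrow> ('a \<Rightarrow> real) \<Rightarrow> 'a \<Rightarrow> real \<Rightarrow> bool"
  where "local_error_bound \<Omega> A d x0 \<kappa> \<longleftrightarrow>
    (\<exists>\<delta>>0. \<forall>x\<in>A. norm (x - x0) < \<delta> \<longrightarrow> (\<exists>z\<in>\<Omega>. norm (z - x) \<le> \<kappa> * d x))"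

lemma local_error_bound_near:
  assumes bound: "local_error_bound \<Omega> A d x0 \<kappa>" and \<kappa>: "0 \<le> \<kappa>"
    and d: "isCont d x0" "d x0 = 0" and \<epsilon>: "0 < \<epsilon>"
  obtains \<delta> where "0 < \<delta>" "\<And>x. x \<in> A \<Longrightarrow> norm (x - x0) < \<delta> \<Longrightarrow>
    \<exists>z\<in>\<Omega>. norm (z - x) \<le> \<kappa> * d x \<and> norm (z - x0) < \<epsilon> \<and> norm (x - x0) < \<epsilon>"
proof -
  obtain \<delta>1 where \<delta>1: "0 < \<delta>1" "\<And>x. x \<in> A \<Longrightarrow> norm (x - x0) < \<delta>1 \<Longrightarrow> \<exists>z\<in>\<Omega>. norm (z - x) \<le> \<kappa> * d x"
    using bound unfolding local_error_bound_def by blast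
  obtain \<delta>2 where \<delta>2: "0 < \<delta>2" "\<And>x. dist x x0 < \<delta>2 \<Longrightarrow> dist (d x) 0 < \<epsilon> / (2 * (\<kappa> + 1))"
    using d \<epsilon> \<kappa> unfolding continuous_at_eps_delta by (metis add_nonneg_pos divide_pos_pos zero_less_one zero_less_numeral mult_pos_pos)
  define \<delta> where "\<delta> = min (\<epsilon> / 2) (min \<delta>1 \<delta>2)"
  have "\<exists>z\<in>\<Omega>. norm (z - x) \<le> \<kappa> * d x \<and> norm (z - x0) < \<epsilon> \<and> norm (x - x0) < \<epsilon>"
    if x: "x \<in> A" "norm (x - x0) < \<delta>" for x
  proof -
    obtain z where z: "z \<in> \<Omega>" "norm (z - x) \<le> \<kappa> * d x" using \<delta>1(2)[OF x(1)] x(2) by (auto simp: \<delta>_def)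
    have "\<bar>d x\<bar> < \<epsilon> / (2 * (\<kappa> + 1))" using \<delta>2(2)[of x] x(2) by (simp add: \<delta>_def dist_norm)
    then have "\<kappa> * d x \<le> \<kappa> * (\<epsilon> / (2 * (\<kappa> + 1)))" using \<kappa> by (intro mult_left_mono) auto
    also have "\<dots> < \<epsilon> / 2" using \<kappa> \<epsilon> by (simp add: field_simps)
    finally have "norm (z - x) < \<epsilon> / 2" using z(2) by linarith
    moreover have "norm (z - x0) \<le> norm (z - x) + norm (x - x0)"
      using norm_triangle_ineq[of "z - x" "x - x0"] by simp
    ultimately show ?thesis using z x(2) \<epsilon> by (auto simp: \<delta>_def)
  qed
  moreover have "0 < \<delta>" using \<epsilon> \<delta>1(1) \<delta>2(1) by (simp add: \<delta>_def)
  ultimately show ?thesis using that by blast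
qed

lemma exact_penalty_local_min:
  fixes \<phi> :: "'a::real_normed_vector \<Rightarrow> real"
  assumes lip: "Lf-lipschitz_on (ball x0 r) \<phi>" "0 < r"
    and bound: "local_error_bound \<Omega> A d x0 \<kappa>" "0 \<le> \<kappa>"
    and d: "isCont d x0" "d x0 = 0" "\<And>x. 0 \<le> d x"
    and min: "local_min_on \<phi> \<Omega> x0" and c: "Lf * \<kappa> \<le> c"
  shows "local_min_on (\<lambda>x. \<phi> x + c * d x) A x0"
proof -
  obtain \<epsilon> where \<epsilon>: "0 < \<epsilon>" "\<And>z. z \<in> \<Omega> \<inter> ball x0 \<epsilon> \<Longrightarrow> \<phi> x0 \<le> \<phi> z"
    using min unfolding local_min_on_def by blast
  obtain \<delta> where \<delta>: "0 < \<delta>" "\<And>x. x \<in> A \<Longrightarrow> norm (x - x0) < \<delta> \<Longrightarrow>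
    \<exists>z\<in>\<Omega>. norm (z - x) \<le> \<kappa> * d x \<and> norm (z - x0) < min \<epsilon> r \<and> norm (x - x0) < min \<epsilon> r"
    using local_error_bound_near[OF bound d(1,2), of "min \<epsilon> r"] \<epsilon>(1) lip(2) by auto
  have "\<phi> x0 + c * d x0 \<le> \<phi> x + c * d x" if x: "x \<in> A \<inter> ball x0 \<delta>" for x
  proof -
    obtain z where z: "z \<in> \<Omega>" "norm (z - x) \<le> \<kappa> * d x" "norm (z - x0) < min \<epsilon> r" "norm (x - x0) < min \<epsilon> r"
      using \<delta>(2)[of x] x by (auto simp: dist_norm norm_minus_commute)
    have "\<phi> x0 \<le> \<phi> z" using \<epsilon>(2)[of z] z by (auto simp: dist_norm norm_minus_commute)
    also have "\<phi> z \<le> \<phi> x + Lf * norm (z - x)"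
      using lipschitz_on_normD[OF lip(1), of z x] z by (auto simp: dist_norm norm_minus_commute)
    also have "Lf * norm (z - x) \<le> Lf * \<kappa> * d x"
      using z(2) lipschitz_on_nonneg[OF lip(1)] by (simp add: mult.assoc mult_left_mono)
    also have "\<dots> \<le> c * d x" using c d(3) by (rule mult_right_mono)
    finally show ?thesis using d(2) by simp
  qed
  then show ?thesis unfolding local_min_on_def using \<delta>(1) by blast
qed

lemma exact_penalty_first_order_growth:
  fixes \<phi> :: "'a::real_normed_vector \<Rightarrow> real"
  assumes lip: "Lf-lipschitz_on (ball x0 r) \<phi>" "0 < r"
    and bound: "local_error_bound \<Omega> A d x0 \<kappa>" "0 \<le> \<kappa>"
    and d: "isCont d x0" "d x0 = 0"
    and growth: "first_order_growth_on \<phi> \<Omega> x0"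
  obtains c where "0 \<le> c" "first_order_growth_on (\<lambda>x. \<phi> x + c * d x) A x0"
proof -
  obtain \<rho> U where g: "0 < \<rho>" "open U" "x0 \<in> U" "\<And>z. z \<in> U \<inter> \<Omega> \<Longrightarrow> \<phi> x0 + \<rho> * norm (z - x0) \<le> \<phi> z"
    using growth unfolding first_order_growth_on_def by blast
  obtain \<epsilon> where \<epsilon>: "0 < \<epsilon>" "ball x0 \<epsilon> \<subseteq> U" using g(2,3) open_contains_ball by blast
  obtain \<delta> where \<delta>: "0 < \<delta>" "\<And>x. x \<in> A \<Longrightarrow> norm (x - x0) < \<delta> \<Longrightarrow>
    \<exists>z\<in>\<Omega>. norm (z - x) \<le> \<kappa> * d x \<and> norm (z - x0) < min \<epsilon> r \<and> norm (x - x0) < min \<epsilon> r"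
    using local_error_bound_near[OF bound d(1,2), of "min \<epsilon> r"] \<epsilon>(1) lip(2) by auto
  define c where "c = (\<rho> + Lf) * \<kappa>"
  have Lf: "0 \<le> Lf" using lip(1) by (rule lipschitz_on_nonneg)
  have "\<phi> x0 + c * d x0 + \<rho> * norm (x - x0) \<le> \<phi> x + c * d x" if x: "x \<in> ball x0 \<delta> \<inter> A" for x
  proof -
    obtain z where z: "z \<in> \<Omega>" "norm (z - x) \<le> \<kappa> * d x" "norm (z - x0) < min \<epsilon> r" "norm (x - x0) < min \<epsilon> r"
      using \<delta>(2)[of x] x by (auto simp: dist_norm norm_minus_commute)
    have "\<phi> x0 + \<rho> * norm (z - x0) \<le> \<phi> z" using g(4)[of z] \<epsilon>(2) z by (auto simp: dist_norm norm_minus_commute)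
    moreover have "\<phi> z \<le> \<phi> x + Lf * norm (z - x)"
      using lipschitz_on_normD[OF lip(1), of z x] z by (auto simp: dist_norm norm_minus_commute)
    moreover have "\<rho> * norm (x - x0) \<le> \<rho> * norm (z - x) + \<rho> * norm (z - x0)"
      using norm_triangle_ineq[of "x - z" "z - x0"] g(1)
      by (simp add: norm_minus_commute[of x z] distrib_left[symmetric] mult_left_mono)
    moreover have "(\<rho> + Lf) * norm (z - x) \<le> c * d x"
      unfolding c_def using mult_left_mono[OF z(2), of "\<rho> + Lf"] g(1) Lf by (simp add: mult.assoc)
    ultimately show ?thesis using d(2) by (simp add: algebra_simps)
  qed
  moreover have "0 \<le> c" unfolding c_def using g(1) Lf bound(2) by simp
  ultimately show ?thesis using that g(1) \<delta>(1) unfolding first_order_growth_on_def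
    by (metis centre_in_ball open_ball)
qed

section \<open>Max functions and Danskin's theorem\<close>

definition danskin_deriv :: "('a \<Rightarrow> 'w \<Rightarrow> real) \<Rightarrow> ('a \<Rightarrow> 'w \<Rightarrow> 'a::real_inner) \<Rightarrow> 'w set \<Rightarrow> 'a \<Rightarrow> 'a \<Rightarrow> real"
  where "danskin_deriv f gf W x h = (SUP \<omega>\<in>active_set f W x. gf x \<omega> \<bullet> h)"

lemma abs_inner_le: "norm a \<le> B \<Longrightarrow> \<bar>a \<bullet> h\<bar> \<le> B * norm h"
  by (meson Cauchy_Schwarz_ineq2 mult_right_mono norm_ge_zero order_trans)

lemma onorm_inner_le: "onorm (\<lambda>h. a \<bullet> h) \<le> norm a"
  by (rule onorm_bound) (simp_all add: Cauchy_Schwarz_ineq2)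

locale max_function =
  fixes f :: "'a::euclidean_space \<Rightarrow> 'w::t2_space \<Rightarrow> real" and gf :: "'a \<Rightarrow> 'w \<Rightarrow> 'a" and W :: "'w set"
  assumes W: "W \<noteq> {}" "compact W"
    and f_diff: "\<And>\<omega> x. \<omega> \<in> W \<Longrightarrow> ((\<lambda>x. f x \<omega>) has_derivative (\<lambda>h. gf x \<omega> \<bullet> h)) (at x)"
    and f_cont: "continuous_on (UNIV \<times> W) (\<lambda>p. f (fst p) (snd p))"
    and gf_cont: "continuous_on (UNIV \<times> W) (\<lambda>p. gf (fst p) (snd p))"
begin

abbreviation F where "F \<equiv> maxfun f W"
abbreviation F' where "F' \<equiv> danskin_deriv f gf W"

lemma continuous_on_section:
  assumes "continuous_on (UNIV \<times> W) (\<lambda>p. g (fst p) (snd p))"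
  shows "continuous_on W (g x)"
proof -
  have "continuous_on W ((\<lambda>p. g (fst p) (snd p)) \<circ> (\<lambda>\<omega>. (x, \<omega>)))"
    by (intro continuous_on_compose continuous_intros continuous_on_subset[OF assms]) auto
  then show ?thesis by (simp add: o_def)
qed

lemmas continuous_on_f = continuous_on_section[OF f_cont]
  and continuous_on_gf = continuous_on_section[OF gf_cont]

lemma maxfun_upper: "\<omega> \<in> W \<Longrightarrow> f x \<omega> \<le> F x"
  unfolding maxfun_def
  by (intro cSUP_upper bounded_imp_bdd_above compact_imp_bounded compact_continuous_image continuous_on_f W)

lemma maxfun_least: "(\<And>\<omega>. \<omega> \<in> W \<Longrightarrow> f x \<omega> \<le> c) \<Longrightarrow> F x \<le> c"
  unfolding maxfun_def using W(1) by (rule cSUP_least)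

lemma active_set_nonempty: "active_set f W x \<noteq> {}"
proof -
  obtain \<omega> where "\<omega> \<in> W" "\<forall>\<omega>'\<in>W. f x \<omega>' \<le> f x \<omega>"
    using continuous_attains_sup[OF W(2) W(1) continuous_on_f] by blast
  then have "\<omega> \<in> active_set f W x"
    unfolding active_set_def using maxfun_upper maxfun_least[of x "f x \<omega>"] by (auto intro: antisym)
  then show ?thesis by blast
qed

lemma compact_active_set: "compact (active_set f W x)"
  unfolding active_set_def
  by (rule closedin_compact[OF W(2)], rule continuous_closedin_preimage_constant[OF continuous_on_f])

lemma active_set_iff: "\<omega> \<in> active_set f W x \<longleftrightarrow> \<omega> \<in> W \<and> f x \<omega> = F x"
  unfolding active_set_def by auto

lemma gf_bounded: "\<exists>B>0. \<forall>\<omega>\<in>W. norm (gf x \<omega>) \<le> B"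
  using compact_imp_bounded[OF compact_continuous_image[OF continuous_on_gf[of x] W(2)]]
  unfolding bounded_pos by auto

lemma danskin_deriv_attained:
  obtains \<omega> where "\<omega> \<in> active_set f W x" "gf x \<omega> \<bullet> h = F' x h"
    "\<And>\<omega>'. \<omega>' \<in> active_set f W x \<Longrightarrow> gf x \<omega>' \<bullet> h \<le> gf x \<omega> \<bullet> h"
proof -
  have "continuous_on (active_set f W x) (\<lambda>\<omega>. gf x \<omega> \<bullet> h)"
    by (intro continuous_intros continuous_on_subset[OF continuous_on_gf]) (auto simp: active_set_iff)
  then obtain \<omega> where \<omega>: "\<omega> \<in> active_set f W x" "\<And>\<omega>'. \<omega>' \<in> active_set f W x \<Longrightarrow> gf x \<omega>' \<bullet> h \<le> gf x \<omega> \<bullet> h"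
    using continuous_attains_sup[OF compact_active_set active_set_nonempty] by blast
  moreover have "F' x h = gf x \<omega> \<bullet> h"
    unfolding danskin_deriv_def using \<omega> by (intro antisym cSUP_least cSUP_upper bdd_aboveI2) auto
  ultimately show ?thesis using that by simp
qed

lemma danskin_deriv_upper: "\<omega> \<in> active_set f W x \<Longrightarrow> gf x \<omega> \<bullet> h \<le> F' x h"
  by (metis danskin_deriv_attained)

lemma danskin_deriv_least: "(\<And>\<omega>. \<omega> \<in> active_set f W x \<Longrightarrow> gf x \<omega> \<bullet> h \<le> c) \<Longrightarrow> F' x h \<le> c"
  by (metis danskin_deriv_attained)

lemma danskin_deriv_lipschitz:
  obtains B where "B-lipschitz_on UNIV (F' x)"
proof -
  obtain B where B: "0 < B" "\<And>\<omega>. \<omega> \<in> W \<Longrightarrow> norm (gf x \<omega>) \<le> B" using gf_bounded[of x] by blast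
  have upper: "F' x h \<le> F' x h' + B * norm (h - h')" for h h'
  proof (rule danskin_deriv_least)
    fix \<omega> assume \<omega>: "\<omega> \<in> active_set f W x"
    have "\<bar>gf x \<omega> \<bullet> (h - h')\<bar> \<le> B * norm (h - h')"
      using B(2) \<omega> by (intro abs_inner_le) (simp add: active_set_iff)
    then show "gf x \<omega> \<bullet> h \<le> F' x h' + B * norm (h - h')"
      using danskin_deriv_upper[OF \<omega>, of h'] by (simp add: inner_diff_right abs_le_iff)
  qed
  have "dist (F' x h) (F' x h') \<le> B * dist h h'" for h h'
    using upper[of h h'] upper[of h' h] norm_minus_commute[of h h']
    by (simp add: dist_real_def dist_norm abs_le_iff)
  then have "B-lipschitz_on UNIV (F' x)" using B(1) by (intro lipschitz_onI) simp_all
  then show ?thesis by (rule that)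
qed

lemma continuous_on_danskin_deriv: "continuous_on S (F' x)"
  by (metis danskin_deriv_lipschitz lipschitz_on_continuous_on continuous_on_subset subset_UNIV)

lemma danskin_deriv_scaleR:
  assumes "0 \<le> t" shows "F' x (t *\<^sub>R h) = t * F' x h"
proof -
  obtain \<omega> where \<omega>: "\<omega> \<in> active_set f W x" "gf x \<omega> \<bullet> h = F' x h" by (rule danskin_deriv_attained)
  have "F' x (t *\<^sub>R h) \<le> t * F' x h"
    using assms danskin_deriv_upper by (intro danskin_deriv_least) (simp add: mult_left_mono)
  moreover have "t * F' x h \<le> F' x (t *\<^sub>R h)" using danskin_deriv_upper[OF \<omega>(1), of "t *\<^sub>R h"] \<omega>(2) by simp
  ultimately show ?thesis by simp
qed

lemma subdiff_max_inner_le: "u \<in> subdiff_max f gf W x \<Longrightarrow> u \<bullet> h \<le> F' x h"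
proof -
  have "h \<bullet> gf x \<omega> \<le> F' x h" if "\<omega> \<in> active_set f W x" for \<omega>
    using danskin_deriv_upper[OF that, of h] by (simp add: inner_commute)
  then have "subdiff_max f gf W x \<subseteq> {u. h \<bullet> u \<le> F' x h}"
    unfolding subdiff_max_def by (intro hull_minimal convex_halfspace_le) auto
  then show "u \<in> subdiff_max f gf W x \<Longrightarrow> u \<bullet> h \<le> F' x h" by (auto simp: inner_commute)
qed

lemma gf_in_subdiff_max: "\<omega> \<in> active_set f W x \<Longrightarrow> gf x \<omega> \<in> subdiff_max f gf W x"
  unfolding subdiff_max_def by (rule hull_inc) simp

lemma compact_subdiff_max: "compact (subdiff_max f gf W x)"
  unfolding subdiff_max_def
  by (intro compact_convex_hull compact_continuous_image compact_active_set
      continuous_on_subset[OF continuous_on_gf]) (auto simp: active_set_iff)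

lemma convex_subdiff_max: "convex (subdiff_max f gf W x)"
  unfolding subdiff_max_def by (rule convex_convex_hull)

lemma uniform_linearization:
  assumes e: "0 < e"
  obtains d where "0 < d" "\<And>x \<omega>. norm (x - x0) < d \<Longrightarrow> \<omega> \<in> W \<Longrightarrow>
    \<bar>f x \<omega> - f x0 \<omega> - gf x0 \<omega> \<bullet> (x - x0)\<bar> \<le> e * norm (x - x0)"
proof -
  obtain d where d: "0 < d" "\<And>x \<omega>. dist x x0 < d \<Longrightarrow> \<omega> \<in> W \<Longrightarrow> dist (gf x \<omega>) (gf x0 \<omega>) < e"
    using uniformly_continuous_at_compact_parameter[OF gf_cont W(2) e] by blast
  have "\<bar>f x \<omega> - f x0 \<omega> - gf x0 \<omega> \<bullet> (x - x0)\<bar> \<le> e * norm (x - x0)"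
    if x: "norm (x - x0) < d" and \<omega>: "\<omega> \<in> W" for x \<omega>
  proof -
    have "norm (f x \<omega> - f x0 \<omega> - gf x0 \<omega> \<bullet> (x - x0)) \<le> norm (x - x0) * e"
    proof (intro differentiable_bound_linearization[where S = "ball x0 d" and f' = "\<lambda>y h. gf y \<omega> \<bullet> h"])
      fix t :: real assume "t \<in> {0..1}"
      then have "(1 - t) *\<^sub>R x0 + t *\<^sub>R x \<in> ball x0 d"
        using x d(1) convex_ball[of x0 d, unfolded convex_alt] by (auto simp: dist_norm norm_minus_commute)
      then show "x0 + t *\<^sub>R (x - x0) \<in> ball x0 d" by (simp add: algebra_simps)
    next
      fix y assume "y \<in> ball x0 d"
      then have "norm (gf y \<omega> - gf x0 \<omega>) \<le> e" using d(2)[OF _ \<omega>, of y] by (simp add: dist_norm norm_minus_commute)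
      moreover have "(\<lambda>h. gf y \<omega> \<bullet> h) - (\<lambda>h. gf x0 \<omega> \<bullet> h) = (\<lambda>h. (gf y \<omega> - gf x0 \<omega>) \<bullet> h)"
        by (simp add: fun_eq_iff inner_diff_left)
      ultimately show "onorm ((\<lambda>h. gf y \<omega> \<bullet> h) - (\<lambda>h. gf x0 \<omega> \<bullet> h)) \<le> e"
        using onorm_inner_le order_trans by metis
    qed (use f_diff[OF \<omega>] d(1) in \<open>auto intro: has_derivative_at_withinI\<close>)
    then show ?thesis by (simp add: mult.commute)
  qed
  then show ?thesis using that d(1) by blast
qed

lemma near_active_gradients:
  assumes e: "0 < e"
  obtains \<eta> where "0 < \<eta>"
    "\<And>\<omega>. \<omega> \<in> W \<Longrightarrow> F x0 - f x0 \<omega> < \<eta> \<Longrightarrow> \<exists>\<omega>'\<in>active_set f W x0. norm (gf x0 \<omega> - gf x0 \<omega>') < e"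
proof -
  define V where "V = W \<inter> gf x0 -` (\<Union>\<omega>'\<in>active_set f W x0. ball (gf x0 \<omega>') e)"
  have close: "\<exists>\<omega>'\<in>active_set f W x0. norm (gf x0 \<omega> - gf x0 \<omega>') < e" if "\<omega> \<in> V" for \<omega>
    using that unfolding V_def by (auto simp: dist_norm norm_minus_commute)
  have "openin (top_of_set W) V"
    unfolding V_def by (rule continuous_openin_preimage_gen[OF continuous_on_gf]) auto
  then have "compact (W - V)"
    by (intro closedin_compact[OF W(2)]) (metis closedin_diff closedin_topspace topspace_euclidean_subtopology)
  show ?thesis
  proof (cases "W - V = {}")
    case True
    show ?thesis
    proof (rule that[of 1])
      fix \<omega> assume "\<omega> \<in> W"
      then show "\<exists>\<omega>'\<in>active_set f W x0. norm (gf x0 \<omega> - gf x0 \<omega>') < e" using True close by blast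
    qed simp
  next
    case False
    have "continuous_on (W - V) (\<lambda>\<omega>. F x0 - f x0 \<omega>)"
      by (intro continuous_intros continuous_on_subset[OF continuous_on_f]) auto
    then obtain \<omega>0 where \<omega>0: "\<omega>0 \<in> W - V" "\<And>\<omega>. \<omega> \<in> W - V \<Longrightarrow> F x0 - f x0 \<omega>0 \<le> F x0 - f x0 \<omega>"
      using continuous_attains_inf[OF \<open>compact (W - V)\<close> False] by blast
    have "\<omega>0 \<notin> active_set f W x0" using \<omega>0(1) e unfolding V_def by force
    then have "0 < F x0 - f x0 \<omega>0" using \<omega>0(1) maxfun_upper[of \<omega>0 x0] by (auto simp: active_set_iff)
    moreover have "\<exists>\<omega>'\<in>active_set f W x0. norm (gf x0 \<omega> - gf x0 \<omega>') < e"
      if "\<omega> \<in> W" "F x0 - f x0 \<omega> < F x0 - f x0 \<omega>0" for \<omega>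
      using \<omega>0(2)[of \<omega>] that close by force
    ultimately show ?thesis using that by blast
  qed
qed

lemma linearization_le_maxfun:
  assumes lin: "\<And>\<omega>. \<omega> \<in> W \<Longrightarrow> \<bar>f x \<omega> - f x0 \<omega> - gf x0 \<omega> \<bullet> (x - x0)\<bar> \<le> e * norm (x - x0)"
  shows "F' x0 (x - x0) \<le> F x - F x0 + e * norm (x - x0)"
proof (rule danskin_deriv_least)
  fix \<omega> assume "\<omega> \<in> active_set f W x0"
  then have \<omega>: "\<omega> \<in> W" "f x0 \<omega> = F x0" by (auto simp: active_set_iff)
  have "gf x0 \<omega> \<bullet> (x - x0) \<le> f x \<omega> - f x0 \<omega> + e * norm (x - x0)"
    using lin[OF \<omega>(1)] unfolding abs_le_iff by linarith
  then show "gf x0 \<omega> \<bullet> (x - x0) \<le> F x - F x0 + e * norm (x - x0)"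
    using maxfun_upper[OF \<omega>(1), of x] \<omega>(2) by linarith
qed

text \<open>Parameters that are almost active have gradients close to active ones, and the others
  cannot realise the maximum near \<open>x0\<close>.\<close>

lemma maxfun_le_linearization:
  assumes lin: "\<And>\<omega>. \<omega> \<in> W \<Longrightarrow> \<bar>f x \<omega> - f x0 \<omega> - gf x0 \<omega> \<bullet> (x - x0)\<bar> \<le> e / 2 * norm (x - x0)"
    and near: "\<And>\<omega>. \<omega> \<in> W \<Longrightarrow> F x0 - f x0 \<omega> < \<eta> \<Longrightarrow>
      \<exists>\<omega>'\<in>active_set f W x0. norm (gf x0 \<omega> - gf x0 \<omega>') < e / 2"
    and B: "\<And>\<omega>. \<omega> \<in> W \<Longrightarrow> norm (gf x0 \<omega>) \<le> B" and small: "(2 * B + e) * norm (x - x0) \<le> \<eta>"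
    and e: "0 \<le> e"
  shows "F x \<le> F x0 + F' x0 (x - x0) + e * norm (x - x0)"
proof (rule maxfun_least)
  fix \<omega> assume \<omega>: "\<omega> \<in> W"
  define k where "k = x - x0"
  have "0 \<le> e * norm k" using e by simp
  show "f x \<omega> \<le> F x0 + F' x0 (x - x0) + e * norm (x - x0)"
  proof (cases "F x0 - f x0 \<omega> < \<eta>")
    case True
    then obtain \<omega>' where \<omega>': "\<omega>' \<in> active_set f W x0" "norm (gf x0 \<omega> - gf x0 \<omega>') < e / 2"
      using near[OF \<omega>] by blast
    have "(gf x0 \<omega> - gf x0 \<omega>') \<bullet> k \<le> e / 2 * norm k"
      using abs_inner_le[of "gf x0 \<omega> - gf x0 \<omega>'" "e / 2" k] \<omega>'(2) by simp
    then have "gf x0 \<omega> \<bullet> k \<le> F' x0 k + e / 2 * norm k"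
      using danskin_deriv_upper[OF \<omega>'(1), of k] by (simp add: inner_diff_left)
    then show ?thesis using lin[OF \<omega>] maxfun_upper[OF \<omega>, of x0] \<open>0 \<le> e * norm k\<close>
      unfolding k_def abs_le_iff by linarith
  next
    case False
    obtain \<omega>' where \<omega>': "\<omega>' \<in> active_set f W x0" using active_set_nonempty by blast
    then have "- (B * norm k) \<le> F' x0 k"
      using abs_inner_le[OF B, of \<omega>' k] danskin_deriv_upper[OF \<omega>', of k] by (auto simp: active_set_iff abs_le_iff)
    moreover have "gf x0 \<omega> \<bullet> k \<le> B * norm k" using abs_inner_le[OF B[OF \<omega>], of k] by (simp add: abs_le_iff)
    moreover have "2 * (B * norm k) + e * norm k \<le> \<eta>" using small unfolding k_def by (simp add: algebra_simps)
    ultimately show ?thesis using lin[OF \<omega>] False \<open>0 \<le> e * norm k\<close> unfolding k_def abs_le_iff by linarith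
  qed
qed

theorem danskin:
  assumes e: "0 < e"
  obtains d where "0 < d" "\<And>x. norm (x - x0) < d \<Longrightarrow> \<bar>F x - F x0 - F' x0 (x - x0)\<bar> \<le> e * norm (x - x0)"
proof -
  obtain d1 where d1: "0 < d1" "\<And>x \<omega>. norm (x - x0) < d1 \<Longrightarrow> \<omega> \<in> W \<Longrightarrow>
      \<bar>f x \<omega> - f x0 \<omega> - gf x0 \<omega> \<bullet> (x - x0)\<bar> \<le> e / 2 * norm (x - x0)"
    using uniform_linearization[of "e / 2"] e by auto
  obtain \<eta> where \<eta>: "0 < \<eta>" "\<And>\<omega>. \<omega> \<in> W \<Longrightarrow> F x0 - f x0 \<omega> < \<eta> \<Longrightarrow>
      \<exists>\<omega>'\<in>active_set f W x0. norm (gf x0 \<omega> - gf x0 \<omega>') < e / 2"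
    using near_active_gradients[of "e / 2"] e by auto
  obtain B where B: "0 < B" "\<And>\<omega>. \<omega> \<in> W \<Longrightarrow> norm (gf x0 \<omega>) \<le> B" using gf_bounded[of x0] by blast
  define d where "d = min d1 (\<eta> / (2 * B + e))"
  have "\<bar>F x - F x0 - F' x0 (x - x0)\<bar> \<le> e * norm (x - x0)" if x: "norm (x - x0) < d" for x
  proof -
    have lin: "\<bar>f x \<omega> - f x0 \<omega> - gf x0 \<omega> \<bullet> (x - x0)\<bar> \<le> e / 2 * norm (x - x0)" if "\<omega> \<in> W" for \<omega>
      using d1(2)[OF _ that, of x] x unfolding d_def by simp
    have "norm (x - x0) < \<eta> / (2 * B + e)" using x unfolding d_def by simp
    then have "(2 * B + e) * norm (x - x0) \<le> \<eta>" using e B(1) by (simp add: pos_less_divide_eq mult.commute)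
    from maxfun_le_linearization[OF lin \<eta>(2) B(2) this] e
    have upper: "F x - F x0 - F' x0 (x - x0) \<le> e * norm (x - x0)" by simp
    have "e / 2 * norm (x - x0) \<le> e * norm (x - x0)" using e by (intro mult_right_mono) auto
    then have "\<bar>f x \<omega> - f x0 \<omega> - gf x0 \<omega> \<bullet> (x - x0)\<bar> \<le> e * norm (x - x0)" if "\<omega> \<in> W" for \<omega>
      using lin[OF that] by linarith
    from linearization_le_maxfun[OF this] upper show ?thesis by simp
  qed
  moreover have "0 < d" unfolding d_def using d1(1) \<eta>(1) B(1) e by simp
  ultimately show ?thesis using that by blast
qed

lemma maxfun_dir_deriv: "((\<lambda>t. (F (x0 + t *\<^sub>R h) - F x0) / t) \<longlongrightarrow> F' x0 h) (at_right 0)"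
proof (rule tendstoI)
  fix e :: real assume "0 < e"
  obtain d where d: "0 < d" "\<And>x. norm (x - x0) < d \<Longrightarrow> \<bar>F x - F x0 - F' x0 (x - x0)\<bar> \<le> e / (2 * (norm h + 1)) * norm (x - x0)"
    using danskin[of "e / (2 * (norm h + 1))"] \<open>0 < e\<close> by (auto simp: add_nonneg_pos)
  have "dist ((F (x0 + t *\<^sub>R h) - F x0) / t) (F' x0 h) < e" if t: "0 < t" "t < d / (norm h + 1)" for t
  proof -
    have "t * norm h \<le> t * (norm h + 1)" using t by simp
    also have "\<dots> < d" using t by (simp add: pos_less_divide_eq add_nonneg_pos mult.commute)
    finally have "norm (t *\<^sub>R h) < d" using t by simp
    then have "\<bar>F (x0 + t *\<^sub>R h) - F x0 - t * F' x0 h\<bar> \<le> e / (2 * (norm h + 1)) * norm h * t"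
      using d(2)[of "x0 + t *\<^sub>R h"] danskin_deriv_scaleR[of t x0 h] t by (simp add: ac_simps)
    also have "e / (2 * (norm h + 1)) * norm h = e / 2 * (norm h / (norm h + 1))" by simp
    also have "\<dots> \<le> e / 2" using \<open>0 < e\<close> by (intro mult_left_le) (simp_all add: add_nonneg_pos)
    finally have "\<bar>F (x0 + t *\<^sub>R h) - F x0 - t * F' x0 h\<bar> \<le> e / 2 * t" using t by (simp add: mult_right_mono)
    then have "\<bar>(F (x0 + t *\<^sub>R h) - F x0) / t - F' x0 h\<bar> \<le> e / 2"
      using t by (simp add: field_simps abs_divide)
    then show ?thesis using \<open>0 < e\<close> by (simp add: dist_real_def)
  qed
  moreover have "0 < d / (norm h + 1)" using d(1) by (simp add: add_nonneg_pos)
  ultimately show "\<forall>\<^sub>F t in at_right 0. dist ((F (x0 + t *\<^sub>R h) - F x0) / t) (F' x0 h) < e"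
    unfolding eventually_at_right[OF zero_less_one] by blast
qed

lemma maxfun_lipschitz:
  obtains L where "L-lipschitz_on (ball x0 1) F"
proof -
  have "compact ((\<lambda>p. gf (fst p) (snd p)) ` (cball x0 1 \<times> W))"
    by (intro compact_continuous_image compact_Times compact_cball W(2) continuous_on_subset[OF gf_cont]) auto
  then obtain B where B0: "0 < B" and
    bound: "\<And>v. v \<in> (\<lambda>p. gf (fst p) (snd p)) ` (cball x0 1 \<times> W) \<Longrightarrow> norm v \<le> B"
    using compact_imp_bounded[of "(\<lambda>p. gf (fst p) (snd p)) ` (cball x0 1 \<times> W)"] unfolding bounded_pos by meson
  have "norm (gf y \<omega>) \<le> B" if "y \<in> cball x0 1" "\<omega> \<in> W" for y \<omega>
    using that by (intro bound image_eqI[of _ _ "(y, \<omega>)"]) auto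
  note B = B0 this
  have f_lip: "f x \<omega> - f z \<omega> \<le> B * norm (x - z)" if "\<omega> \<in> W" "x \<in> ball x0 1" "z \<in> ball x0 1" for x z \<omega>
  proof -
    have "norm (f x \<omega> - f z \<omega>) \<le> B * norm (x - z)"
    proof (rule differentiable_bound[OF convex_ball])
      show "((\<lambda>y. f y \<omega>) has_derivative (\<lambda>h. gf y \<omega> \<bullet> h)) (at y within ball x0 1)" for y
        using f_diff[OF that(1)] by (rule has_derivative_at_withinI)
      show "onorm (\<lambda>h. gf y \<omega> \<bullet> h) \<le> B" if "y \<in> ball x0 1" for y
        using onorm_inner_le[of "gf y \<omega>"] B(2)[of y \<omega>] that \<open>\<omega> \<in> W\<close> by force
    qed (use that in auto)
    then show ?thesis by simp
  qed
  have F_lip: "F x \<le> F z + B * norm (x - z)" if "x \<in> ball x0 1" "z \<in> ball x0 1" for x z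
  proof (rule maxfun_least)
    fix \<omega> assume "\<omega> \<in> W"
    then show "f x \<omega> \<le> F z + B * norm (x - z)" using f_lip[OF _ that] maxfun_upper[of \<omega> z] by force
  qed
  have "dist (F x) (F z) \<le> B * dist x z" if "x \<in> ball x0 1" "z \<in> ball x0 1" for x z
    using F_lip[OF that] F_lip[OF that(2,1)] norm_minus_commute[of x z]
    by (simp add: dist_real_def dist_norm abs_le_iff)
  then have "B-lipschitz_on (ball x0 1) F" using B(1) by (intro lipschitz_onI) simp_all
  then show ?thesis by (rule that)
qed

lemma maxfun_upper_hadamard:
  assumes e: "0 < e"
  obtains d where "0 < d" "\<And>t h'. 0 < t \<Longrightarrow> t < d \<Longrightarrow> norm (h' - h) < d \<Longrightarrow>
    F (x0 + t *\<^sub>R h') \<le> F x0 + t * (F' x0 h + e)"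
proof -
  obtain B where B: "B-lipschitz_on UNIV (F' x0)" by (rule danskin_deriv_lipschitz)
  have "0 \<le> B" using B by (rule lipschitz_on_nonneg)
  define e1 where "e1 = e / (2 * (norm h + 1))"
  have "0 < norm h + 1" by (simp add: add_nonneg_pos)
  then have e1: "0 < e1" "e1 * (norm h + 1) = e / 2" using e unfolding e1_def by (simp_all add: field_simps)
  obtain d1 where d1: "0 < d1" "\<And>x. norm (x - x0) < d1 \<Longrightarrow> \<bar>F x - F x0 - F' x0 (x - x0)\<bar> \<le> e1 * norm (x - x0)"
    using danskin[OF e1(1)] by blast
  define d where "d = min 1 (min (d1 / (norm h + 1)) (e / (2 * (B + 1))))"
  have "F (x0 + t *\<^sub>R h') \<le> F x0 + t * (F' x0 h + e)" if t: "0 < t" "t < d" and h': "norm (h' - h) < d" for t h'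
  proof -
    have "norm h' \<le> norm h + 1" using h' norm_triangle_ineq2[of h' h] unfolding d_def by linarith
    then have "t * norm h' \<le> t * (norm h + 1)" using t by (simp add: mult_left_mono)
    also have "\<dots> < d1" using t unfolding d_def by (simp add: pos_less_divide_eq add_nonneg_pos)
    finally have "\<bar>F (x0 + t *\<^sub>R h') - F x0 - t * F' x0 h'\<bar> \<le> e1 * (t * norm h')"
      using d1(2)[of "x0 + t *\<^sub>R h'"] t danskin_deriv_scaleR[of t x0 h'] by simp
    also have "\<dots> \<le> e1 * (t * (norm h + 1))"
      by (rule mult_left_mono) (use \<open>t * norm h' \<le> t * (norm h + 1)\<close> e1(1) in auto)
    also have "\<dots> = t * (e / 2)" by (simp add: e1(2)[symmetric] ac_simps)
    finally have "F (x0 + t *\<^sub>R h') \<le> F x0 + t * F' x0 h' + t * (e / 2)"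
      by (simp only: abs_le_iff) linarith
    moreover have "F' x0 h' \<le> F' x0 h + e / 2"
    proof -
      have "F' x0 h' \<le> F' x0 h + B * norm (h' - h)"
        using lipschitz_on_normD[OF B, of h' h] by simp
      moreover have "B * norm (h' - h) \<le> (B + 1) * (e / (2 * (B + 1)))"
        using h' \<open>0 \<le> B\<close> unfolding d_def by (intro mult_mono) auto
      moreover have "B + 1 \<noteq> 0" using \<open>0 \<le> B\<close> by linarith
      then have "(B + 1) * (e / (2 * (B + 1))) = e / 2" by (simp add: field_simps)
      ultimately show ?thesis by linarith
    qed
    then have "t * F' x0 h' \<le> t * (F' x0 h + e / 2)"
      using t by (intro mult_left_mono) auto
    ultimately show ?thesis by (simp add: distrib_left)
  qed
  moreover have "0 < d" unfolding d_def using d1(1) e \<open>0 \<le> B\<close> by (simp add: add_nonneg_pos)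
  ultimately show ?thesis using that by blast
qed

end

section \<open>The penalty function\<close>

lemma adjoint_vec_inner: "adjoint_vec T \<eta> \<bullet> h = \<eta> (T h)"
proof -
  have "\<eta> (T h) = \<eta> (T (\<Sum>b\<in>Basis. (h \<bullet> b) *\<^sub>R b))" by (simp add: euclidean_representation)
  also have "\<dots> = (\<Sum>b\<in>Basis. \<eta> (T b) * (b \<bullet> h))"
    by (simp add: blinfun.sum_right blinfun.scaleR_right inner_commute mult.commute)
  finally show ?thesis unfolding adjoint_vec_def by (simp add: inner_sum_left)
qed

lemma adjoint_vec_scaleR: "adjoint_vec T (a *\<^sub>R \<eta>) = a *\<^sub>R adjoint_vec T \<eta>"
  unfolding adjoint_vec_def by (simp add: blinfun.scaleR_left scaleR_sum_right)

lemma minkowski_sum_eq: "minkowski_sum S T = (\<Union>x\<in>S. \<Union>y\<in>T. {x + y})"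
  unfolding minkowski_sum_def by auto

lemma linear_adjoint_vec: "linear (adjoint_vec T)"
  by (rule linearI)
    (simp_all add: adjoint_vec_def blinfun.add_left blinfun.scaleR_left scaleR_add_left sum.distrib scaleR_sum_right)

text \<open>For \<open>y \<in> K\<close> this is the subdifferential of \<open>infdist \<cdot> K\<close> at \<open>y\<close>; its support function is
  the distance to \<open>T_K(y)\<close>.\<close>

definition dist_subdiff :: "'b::real_normed_vector set \<Rightarrow> 'b \<Rightarrow> ('b \<Rightarrow>\<^sub>L real) set"
  where "dist_subdiff K y = {\<eta> :: 'b \<Rightarrow>\<^sub>L real. norm \<eta> \<le> 1 \<and> (\<forall>k\<in>K. blinfun_apply \<eta> (k - y) \<le> 0)}"

lemma subdiff_penalty_eq:
  "subdiff_penalty f gf W G DG K c x =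
    {u + c *\<^sub>R adjoint_vec (DG x) \<eta> | u \<eta>. u \<in> subdiff_max f gf W x \<and> \<eta> \<in> dist_subdiff K (G x)}"
  unfolding subdiff_penalty_def dist_subdiff_def by blast

lemma convex_dist_subdiff: "convex (dist_subdiff K y)"
proof (rule convexI)
  fix \<eta>1 \<eta>2 and u v :: real assume \<eta>: "\<eta>1 \<in> dist_subdiff K y" "\<eta>2 \<in> dist_subdiff K y" "0 \<le> u" "0 \<le> v" "u + v = 1"
  have "norm (u *\<^sub>R \<eta>1 + v *\<^sub>R \<eta>2) \<le> u * norm \<eta>1 + v * norm \<eta>2"
    using norm_triangle_ineq[of "u *\<^sub>R \<eta>1" "v *\<^sub>R \<eta>2"] \<eta>(3,4) by simp
  also have "\<dots> \<le> u * 1 + v * 1" using \<eta> unfolding dist_subdiff_def by (intro add_mono mult_left_mono) auto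
  finally show "u *\<^sub>R \<eta>1 + v *\<^sub>R \<eta>2 \<in> dist_subdiff K y"
    using \<eta> unfolding dist_subdiff_def
    by (auto simp: blinfun.add_left blinfun.scaleR_left intro!: add_nonpos_nonpos mult_nonneg_nonpos)
qed

lemma dist_subdiff_polar:
  assumes "cone K" "y \<in> K" "\<eta> \<in> dist_subdiff K y"
  shows "\<eta> y = 0" "k \<in> K \<Longrightarrow> \<eta> k \<le> 0"
proof -
  have "\<eta> (0 - y) \<le> 0" "\<eta> (2 *\<^sub>R y - y) \<le> 0"
    using assms mem_cone[OF assms(1,2), of 0] mem_cone[OF assms(1,2), of 2] unfolding dist_subdiff_def by auto
  then show "\<eta> y = 0" by (simp add: blinfun.diff_right blinfun.scaleR_right blinfun.minus_right)
  then show "k \<in> K \<Longrightarrow> \<eta> k \<le> 0" using assms(3) unfolding dist_subdiff_def by (auto simp: blinfun.diff_right)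
qed

lemma dist_subdiff_le_infdist:
  assumes "convex K" "y \<in> K" "\<eta> \<in> dist_subdiff K y"
  shows "\<eta> v \<le> infdist v (contingent_cone K y)"
proof -
  have "\<eta> w \<le> 0" if w: "w \<in> radial_cone K y" for w
  proof -
    obtain t k where "w = t *\<^sub>R (k - y)" "0 \<le> t" "k \<in> K" using w by (rule radial_coneE)
    then show ?thesis using assms(3) unfolding dist_subdiff_def
      by (auto simp: blinfun.scaleR_right mult_nonneg_nonpos)
  qed
  then show ?thesis
    using assms convex_cone_nonempty[OF convex_cone_radial_cone] unfolding dist_subdiff_def
    by (auto simp: infdist_contingent_cone intro!: blinfun_le_infdist)
qed

lemma dist_subdiff_attains_infdist:
  fixes K :: "'b::real_normed_vector set"
  assumes "convex K" "y \<in> K"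
  obtains \<eta> where "\<eta> \<in> dist_subdiff K y" "\<eta> v = infdist v (contingent_cone K y)"
proof -
  obtain \<eta> :: "'b \<Rightarrow>\<^sub>L real" where \<eta>: "norm \<eta> \<le> 1" "\<And>w. w \<in> radial_cone K y \<Longrightarrow> \<eta> w \<le> 0"
    "\<eta> v = infdist v (radial_cone K y)"
    using convex_cone_infdist_functional[OF convex_cone_radial_cone[OF assms]] by blast
  have "\<eta> \<in> dist_subdiff K y"
    unfolding dist_subdiff_def using \<eta>(1,2) radial_coneI[of _ K 1 y] by auto
  then show ?thesis using that \<eta>(3) assms by (simp add: infdist_contingent_cone)
qed

locale penalty_problem = max_function f gf W
  for f :: "'a::euclidean_space \<Rightarrow> 'w::t2_space \<Rightarrow> real" and gf :: "'a \<Rightarrow> 'w \<Rightarrow> 'a" and W :: "'w set" +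
  fixes A :: "'a set" and K :: "'b::banach set" and G :: "'a \<Rightarrow> 'b" and DG :: "'a \<Rightarrow> 'a \<Rightarrow>\<^sub>L 'b"
    and xs :: 'a
  assumes A: "closed A" "convex A"
    and K: "closed K" "convex K" "cone K"
    and G_diff: "\<And>x. (G has_derivative blinfun_apply (DG x)) (at x)"
    and DG_cont: "continuous_on UNIV DG"
    and feasible: "xs \<in> A" "G xs \<in> K"
begin

abbreviation "TA \<equiv> contingent_cone A xs"
abbreviation "TK \<equiv> contingent_cone K (G xs)"
abbreviation "NA \<equiv> normal_cone A xs"
abbreviation "\<Phi> \<equiv> penalty f W G K"
abbreviation "\<S> c \<equiv> minkowski_sum (subdiff_penalty f gf W G DG K c xs) NA"

definition penalty_dir_deriv :: "real \<Rightarrow> 'a \<Rightarrow> real"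
  where "penalty_dir_deriv c h = F' xs h + c * infdist (DG xs h) TK"

lemma closed_TK: "closed TK"
  using K feasible by (simp add: contingent_cone_convex)

lemma penalty_feasible: "G x \<in> K \<Longrightarrow> \<Phi> c x = F x"
  unfolding penalty_def by simp

lemma sum_subdiff_iff:
  "x \<in> \<S> c \<longleftrightarrow> (\<exists>u \<eta> n. x = u + c *\<^sub>R adjoint_vec (DG xs) \<eta> + n \<and>
      u \<in> subdiff_max f gf W xs \<and> \<eta> \<in> dist_subdiff K (G xs) \<and> n \<in> NA)"
  unfolding minkowski_sum_def subdiff_penalty_eq by blast

lemma convex_sum_subdiff: "convex (\<S> c)"
proof -
  have eq: "subdiff_penalty f gf W G DG K c xs =
      (\<lambda>p. fst p + c *\<^sub>R adjoint_vec (DG xs) (snd p)) ` (subdiff_max f gf W xs \<times> dist_subdiff K (G xs))"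
    unfolding subdiff_penalty_eq by force
  moreover have "linear (\<lambda>p. adjoint_vec (DG xs) (snd p))"
    using linear_compose[OF linear_snd linear_adjoint_vec] by (simp add: o_def)
  then have "linear (\<lambda>p. fst p + c *\<^sub>R adjoint_vec (DG xs) (snd p))"
    by (intro linear_compose_add linear_compose_scale_right linear_fst)
  from convex_linear_image[OF this convex_Times[OF convex_subdiff_max convex_dist_subdiff]]
  have "convex (subdiff_penalty f gf W G DG K c xs)" unfolding eq .
  then show ?thesis unfolding minkowski_sum_eq by (intro convex_sums convex_normal_cone)
qed

lemma sum_subdiff_inner_le:
  assumes "0 \<le> c" "x \<in> \<S> c" "h \<in> TA"
  shows "x \<bullet> h \<le> penalty_dir_deriv c h"
proof -
  obtain u \<eta> n where x: "x = u + c *\<^sub>R adjoint_vec (DG xs) \<eta> + n" "u \<in> subdiff_max f gf W xs"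
    "\<eta> \<in> dist_subdiff K (G xs)" "n \<in> NA"
    using assms(2) sum_subdiff_iff by blast
  have "x \<bullet> h = u \<bullet> h + c * \<eta> (DG xs h) + n \<bullet> h"
    unfolding x(1) by (simp add: inner_add_left adjoint_vec_inner)
  moreover have "\<eta> (DG xs h) \<le> infdist (DG xs h) TK"
    using dist_subdiff_le_infdist[OF K(2) feasible(2) x(3)] .
  then have "c * \<eta> (DG xs h) \<le> c * infdist (DG xs h) TK" using assms(1) by (rule mult_left_mono)
  ultimately show ?thesis
    using subdiff_max_inner_le[OF x(2), of h] normal_cone_inner_le[OF x(4) assms(3)]
    unfolding penalty_dir_deriv_def by linarith
qed

lemma sum_subdiff_inner_attained:
  obtains x where "x \<in> \<S> c" "x \<bullet> h = penalty_dir_deriv c h"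
proof -
  obtain \<omega> where \<omega>: "\<omega> \<in> active_set f W xs" "gf xs \<omega> \<bullet> h = F' xs h" by (rule danskin_deriv_attained)
  obtain \<eta> where \<eta>: "\<eta> \<in> dist_subdiff K (G xs)" "\<eta> (DG xs h) = infdist (DG xs h) TK"
    using dist_subdiff_attains_infdist[OF K(2) feasible(2)] by blast
  have "gf xs \<omega> + c *\<^sub>R adjoint_vec (DG xs) \<eta> + 0 \<in> \<S> c"
    using gf_in_subdiff_max[OF \<omega>(1)] \<eta>(1) zero_in_normal_cone sum_subdiff_iff by blast
  moreover have "(gf xs \<omega> + c *\<^sub>R adjoint_vec (DG xs) \<eta> + 0) \<bullet> h = penalty_dir_deriv c h"
    using \<omega>(2) \<eta>(2) by (simp add: inner_add_left adjoint_vec_inner penalty_dir_deriv_def)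
  ultimately show ?thesis by (rule that)
qed

lemma sum_subdiff_unbounded:
  assumes "h \<notin> TA"
  obtains x where "x \<in> \<S> c" "\<beta> \<le> x \<bullet> h"
proof -
  obtain \<omega> where \<omega>: "\<omega> \<in> active_set f W xs" using active_set_nonempty by blast
  obtain n where n: "n \<in> NA" "\<beta> - gf xs \<omega> \<bullet> h \<le> n \<bullet> h"
    using normal_cone_unbounded[OF A(2) feasible(1) assms] by blast
  have "0 \<in> dist_subdiff K (G xs)" by (simp add: dist_subdiff_def)
  then have "gf xs \<omega> + c *\<^sub>R adjoint_vec (DG xs) 0 + n \<in> \<S> c"
    using gf_in_subdiff_max[OF \<omega>] n(1) sum_subdiff_iff by blast
  moreover have "\<beta> \<le> (gf xs \<omega> + c *\<^sub>R adjoint_vec (DG xs) 0 + n) \<bullet> h"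
    using n(2) by (simp add: inner_add_left adjoint_vec_inner)
  ultimately show ?thesis by (rule that)
qed

subsection \<open>Lagrange multipliers\<close>

lemma dir_deriv_lagrangian: "dir_deriv (lagrangian f W G lam) xs h = F' xs h + lam (DG xs h)"
proof -
  have "((\<lambda>t. xs + t *\<^sub>R h) has_derivative (\<lambda>t. t *\<^sub>R h)) (at 0)"
    by (auto intro!: derivative_eq_intros)
  from has_derivative_compose[OF this G_diff]
  have "((\<lambda>t. lam (G (xs + t *\<^sub>R h))) has_derivative (\<lambda>t. lam (DG xs (t *\<^sub>R h)))) (at 0)"
    by (intro bounded_linear.has_derivative[OF blinfun.bounded_linear_right]) simp
  moreover have "(\<lambda>t. lam (DG xs (t *\<^sub>R h))) = (*) (lam (DG xs h))"
    by (simp add: fun_eq_iff blinfun.scaleR_right)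
  ultimately have "((\<lambda>t. lam (G (xs + t *\<^sub>R h))) has_field_derivative lam (DG xs h)) (at 0 within {0<..})"
    by (simp add: has_field_derivative_def has_derivative_at_withinI)
  then have "((\<lambda>t. (lam (G (xs + t *\<^sub>R h)) - lam (G xs)) / t) \<longlongrightarrow> lam (DG xs h)) (at_right 0)"
    by (simp add: has_field_derivative_iff)
  from tendsto_add[OF maxfun_dir_deriv[of xs h] this]
  have "((\<lambda>t. (lagrangian f W G lam (xs + t *\<^sub>R h) - lagrangian f W G lam xs) / t)
      \<longlongrightarrow> F' xs h + lam (DG xs h)) (at_right 0)"
    unfolding lagrangian_def by (simp add: add_divide_distrib[symmetric] algebra_simps)
  then show ?thesis unfolding dir_deriv_def by (intro tendsto_Lim) simp_all
qed

text \<open>Separation in \<open>\<real>^d\<close>: the closed convex set \<open>\<partial>F(xs) + DG(xs)\<^sup>* lam + N_A(xs)\<close> contains \<open>0\<close>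
  as soon as its support function is nonnegative.\<close>

lemma zero_in_translated_sum_subdiff:
  fixes lam :: "'b \<Rightarrow>\<^sub>L real"
  assumes nonneg: "\<And>h. h \<in> TA \<Longrightarrow> 0 \<le> F' xs h + lam (DG xs h)"
  obtains u n where "u \<in> subdiff_max f gf W xs" "n \<in> NA" "0 = u + adjoint_vec (DG xs) lam + n"
proof -
  define S where "S = (\<Union>u\<in>(+) (adjoint_vec (DG xs) lam) ` subdiff_max f gf W xs. \<Union>n\<in>NA. {u + n})"
  have S_iff: "x \<in> S \<longleftrightarrow> (\<exists>u\<in>subdiff_max f gf W xs. \<exists>n\<in>NA. x = u + adjoint_vec (DG xs) lam + n)" for x
    unfolding S_def by (auto simp: ac_simps)
  have "closed S" unfolding S_def
    by (intro compact_closed_sums compact_translation compact_subdiff_max closed_normal_cone)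
  moreover have "convex S" unfolding S_def
    by (intro convex_sums convex_translation convex_subdiff_max convex_normal_cone)
  moreover have "\<exists>x\<in>S. 0 \<le> x \<bullet> h" for h
  proof (cases "h \<in> TA")
    case True
    obtain \<omega> where \<omega>: "\<omega> \<in> active_set f W xs" "gf xs \<omega> \<bullet> h = F' xs h" by (rule danskin_deriv_attained)
    have "gf xs \<omega> + adjoint_vec (DG xs) lam + 0 \<in> S"
      using S_iff gf_in_subdiff_max[OF \<omega>(1)] zero_in_normal_cone by blast
    moreover have "0 \<le> (gf xs \<omega> + adjoint_vec (DG xs) lam + 0) \<bullet> h"
      using nonneg[OF True] \<omega>(2) by (simp add: inner_add_left adjoint_vec_inner)
    ultimately show ?thesis by blast
  next
    case False
    obtain \<omega> where \<omega>: "\<omega> \<in> active_set f W xs" using active_set_nonempty by blast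
    obtain n where n: "n \<in> NA" "- ((gf xs \<omega> + adjoint_vec (DG xs) lam) \<bullet> h) \<le> n \<bullet> h"
      using normal_cone_unbounded[OF A(2) feasible(1) False] by blast
    have "gf xs \<omega> + adjoint_vec (DG xs) lam + n \<in> S"
      using S_iff gf_in_subdiff_max[OF \<omega>] n(1) by blast
    moreover have "0 \<le> (gf xs \<omega> + adjoint_vec (DG xs) lam + n) \<bullet> h"
      using n(2) by (simp add: inner_add_left)
    ultimately show ?thesis by blast
  qed
  ultimately have "0 \<in> S" by (rule closed_convex_mem_0_of_support)
  then show ?thesis using that unfolding S_iff by blast
qed

lemma lagrange_multiplier_imp_sum_subdiff:
  assumes "is_lagrange_multiplier f W A G K xs lam"
  shows "0 \<in> \<S> (norm lam)"
proof -
  have lam: "lam \<in> polar_cone K" "lam (G xs) = 0" "\<And>h. h \<in> TA \<Longrightarrow> 0 \<le> F' xs h + lam (DG xs h)"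
    using assms unfolding is_lagrange_multiplier_def by (auto simp: dir_deriv_lagrangian)
  obtain u n where u: "u \<in> subdiff_max f gf W xs" "n \<in> NA" "0 = u + adjoint_vec (DG xs) lam + n"
    using zero_in_translated_sum_subdiff[OF lam(3)] by blast
  \<comment> \<open>for \<open>lam = 0\<close> this is \<open>0\<close>, since \<open>1 / 0 = 0\<close>\<close>
  define \<eta> where "\<eta> = (1 / norm lam) *\<^sub>R lam"
  have "\<eta> \<in> dist_subdiff K (G xs)"
    using lam(1,2) unfolding dist_subdiff_def polar_cone_def \<eta>_def
    by (auto simp: blinfun.diff_right blinfun.scaleR_left divide_nonpos_nonneg)
  moreover have "norm lam *\<^sub>R \<eta> = lam" by (simp add: \<eta>_def)
  ultimately show ?thesis
    using u sum_subdiff_iff by (metis adjoint_vec_scaleR)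
qed

lemma sum_subdiff_imp_lagrange_multiplier:
  assumes "0 \<le> c" "0 \<in> \<S> c"
  obtains lam where "is_lagrange_multiplier f W A G K xs lam"
proof -
  obtain u \<eta> n where x: "0 = u + c *\<^sub>R adjoint_vec (DG xs) \<eta> + n" "u \<in> subdiff_max f gf W xs"
    "\<eta> \<in> dist_subdiff K (G xs)" "n \<in> NA"
    using assms(2) sum_subdiff_iff by blast
  have "c *\<^sub>R \<eta> \<in> polar_cone K" "(c *\<^sub>R \<eta>) (G xs) = 0"
    using dist_subdiff_polar[OF K(3) feasible(2) x(3)] assms(1)
    by (auto simp: polar_cone_def blinfun.scaleR_left mult_nonneg_nonpos)
  moreover have "0 \<le> F' xs h + (c *\<^sub>R \<eta>) (DG xs h)" if "h \<in> TA" for h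
  proof -
    have "0 = u \<bullet> h + c * \<eta> (DG xs h) + n \<bullet> h"
      using arg_cong[OF x(1), of "\<lambda>v. v \<bullet> h"] by (simp add: inner_add_left adjoint_vec_inner)
    then show ?thesis
      using subdiff_max_inner_le[OF x(2), of h] normal_cone_inner_le[OF x(4) that]
      by (simp add: blinfun.scaleR_left)
  qed
  ultimately show ?thesis
    using that unfolding is_lagrange_multiplier_def by (auto simp: dir_deriv_lagrangian)
qed

theorem lagrange_multiplier_iff:
  "(\<exists>lam. is_lagrange_multiplier f W A G K xs lam) \<longleftrightarrow> (\<exists>c\<ge>0. 0 \<in> \<S> c)"
  by (metis lagrange_multiplier_imp_sum_subdiff norm_ge_zero sum_subdiff_imp_lagrange_multiplier)

subsection \<open>First order growth\<close>

definition dir_deriv_growth :: "real \<Rightarrow> bool"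
  where "dir_deriv_growth c \<longleftrightarrow> (\<exists>\<delta>>0. \<forall>h\<in>TA. \<delta> * norm h \<le> penalty_dir_deriv c h)"

lemma convex_cone_TA: "convex_cone TA"
  by (rule convex_cone_contingent_cone[OF A(2) feasible(1)])

lemma closed_TA: "closed TA"
  using A feasible by (simp add: contingent_cone_convex)

lemma convex_cone_TK: "convex_cone TK"
  by (rule convex_cone_contingent_cone[OF K(2) feasible(2)])

lemma continuous_on_penalty_dir_deriv: "continuous_on S (penalty_dir_deriv c)"
  unfolding penalty_dir_deriv_def
  by (intro continuous_intros continuous_on_danskin_deriv linear_continuous_on blinfun.bounded_linear_right)

lemma penalty_dir_deriv_scaleR: "0 \<le> t \<Longrightarrow> penalty_dir_deriv c (t *\<^sub>R h) = t * penalty_dir_deriv c h"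
  using infdist_convex_cone_scaleR[OF convex_cone_TK]
  by (simp add: penalty_dir_deriv_def danskin_deriv_scaleR blinfun.scaleR_right algebra_simps)

lemma penalty_dir_deriv_mono: "c \<le> c' \<Longrightarrow> penalty_dir_deriv c h \<le> penalty_dir_deriv c' h"
  by (simp add: penalty_dir_deriv_def mult_right_mono infdist_nonneg)

lemma dir_deriv_growthI_sphere:
  assumes pos: "\<And>h. h \<in> TA \<Longrightarrow> norm h = 1 \<Longrightarrow> 0 < penalty_dir_deriv c h"
  shows "dir_deriv_growth c"
proof -
  define S where "S = TA \<inter> sphere 0 1"
  have "compact S" unfolding S_def using closed_TA by (intro closed_Int_compact compact_sphere)
  obtain \<delta> where \<delta>: "0 < \<delta>" "\<And>u. u \<in> S \<Longrightarrow> \<delta> \<le> penalty_dir_deriv c u"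
  proof (cases "S = {}")
    case True
    then show ?thesis using that[of 1] by simp
  next
    case False
    obtain u0 where "u0 \<in> S" "\<And>u. u \<in> S \<Longrightarrow> penalty_dir_deriv c u0 \<le> penalty_dir_deriv c u"
      using continuous_attains_inf[OF \<open>compact S\<close> False continuous_on_penalty_dir_deriv] by blast
    then show ?thesis using that[of "penalty_dir_deriv c u0"] pos unfolding S_def by force
  qed
  have "\<delta> * norm h \<le> penalty_dir_deriv c h" if h: "h \<in> TA" for h
  proof (cases "h = 0")
    case True
    then show ?thesis using penalty_dir_deriv_scaleR[of 0 c h] by simp
  next
    case False
    then have "(1 / norm h) *\<^sub>R h \<in> S"
      unfolding S_def using convex_cone_scaleR[OF convex_cone_TA _ h] by simp
    then have "\<delta> \<le> penalty_dir_deriv c ((1 / norm h) *\<^sub>R h)" by (rule \<delta>(2))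
    then show ?thesis using False penalty_dir_deriv_scaleR[of "1 / norm h" c h] by (simp add: field_simps)
  qed
  then show ?thesis unfolding dir_deriv_growth_def using \<delta>(1) by blast
qed

theorem interior_iff_dir_deriv_growth:
  assumes c: "0 \<le> c"
  shows "0 \<in> interior (\<S> c) \<longleftrightarrow> dir_deriv_growth c"
proof
  assume "0 \<in> interior (\<S> c)"
  then obtain r where r: "0 < r" "ball 0 r \<subseteq> \<S> c" using mem_interior by blast
  have "r / 2 * norm h \<le> penalty_dir_deriv c h" if h: "h \<in> TA" for h
  proof (cases "h = 0")
    case True
    then show ?thesis using penalty_dir_deriv_scaleR[of 0 c h] by simp
  next
    case False
    have "(r / 2 / norm h) *\<^sub>R h \<in> \<S> c" using r False by (intro subsetD[OF r(2)]) simp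
    from sum_subdiff_inner_le[OF c this h]
    show ?thesis using False by (simp add: power2_norm_eq_inner[symmetric] power2_eq_square)
  qed
  then show "dir_deriv_growth c" unfolding dir_deriv_growth_def using r(1) by (intro exI[of _ "r / 2"]) auto
next
  assume "dir_deriv_growth c"
  then obtain \<delta> where \<delta>: "0 < \<delta>" "\<And>h. h \<in> TA \<Longrightarrow> \<delta> * norm h \<le> penalty_dir_deriv c h"
    unfolding dir_deriv_growth_def by blast
  show "0 \<in> interior (\<S> c)"
  proof (rule convex_interior_mem_0_of_support[OF convex_sum_subdiff \<delta>(1)])
    fix h :: 'a assume "norm h = 1"
    show "\<exists>x\<in>\<S> c. \<delta> \<le> x \<bullet> h"
    proof (cases "h \<in> TA")
      case True
      then show ?thesis using \<delta>(2)[OF True] \<open>norm h = 1\<close>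
        by (metis sum_subdiff_inner_attained mult.right_neutral)
    next
      case False
      then show ?thesis by (metis sum_subdiff_unbounded)
    qed
  qed
qed

lemma penalty_lower_estimate:
  assumes c: "0 \<le> c" and e: "0 < e"
  obtains d where "0 < d" "\<And>x. norm (x - xs) < d \<Longrightarrow>
    \<Phi> c xs + penalty_dir_deriv c (x - xs) - e * norm (x - xs) \<le> \<Phi> c x"
proof -
  define e1 where "e1 = e / (1 + c)"
  have "0 < 1 + c" using c by simp
  have "e1 + c * e1 = (1 + c) * e1" by (simp add: algebra_simps)
  also have "\<dots> = e" using \<open>0 < 1 + c\<close> by (simp add: e1_def)
  finally have e1: "0 < e1" "e1 + c * e1 = e" using \<open>0 < 1 + c\<close> e by (simp_all add: e1_def)
  obtain d1 where d1: "0 < d1" "\<And>x. norm (x - xs) < d1 \<Longrightarrow> \<bar>F x - F xs - F' xs (x - xs)\<bar> \<le> e1 * norm (x - xs)"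
    using danskin[OF e1(1)] by blast
  obtain d2 where d2: "0 < d2" "\<And>x. norm (x - xs) < d2 \<Longrightarrow> norm (G x - G xs - DG xs (x - xs)) \<le> e1 * norm (x - xs)"
    using G_diff[of xs] e1(1) unfolding has_derivative_at_alt by blast
  have "\<Phi> c xs + penalty_dir_deriv c (x - xs) - e * norm (x - xs) \<le> \<Phi> c x"
    if x: "norm (x - xs) < min d1 d2" for x
  proof -
    have "infdist (DG xs (x - xs)) TK \<le> infdist (G xs + DG xs (x - xs)) K"
      by (rule infdist_contingent_cone_le[OF K(2) feasible(2)])
    also have "\<dots> \<le> infdist (G x) K + dist (G xs + DG xs (x - xs)) (G x)" by (rule infdist_triangle)
    also have "\<dots> \<le> infdist (G x) K + e1 * norm (x - xs)"
      using d2(2)[of x] x by (simp add: dist_norm norm_minus_commute algebra_simps)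
    finally have "c * infdist (DG xs (x - xs)) TK - c * (e1 * norm (x - xs)) \<le> c * infdist (G x) K"
      using c by (simp add: mult_left_mono right_diff_distrib[symmetric] del: right_diff_distrib)
    moreover have "F xs + F' xs (x - xs) - e1 * norm (x - xs) \<le> F x" using d1(2)[of x] x by simp
    moreover have "e1 * norm (x - xs) + c * (e1 * norm (x - xs)) = e * norm (x - xs)"
      using arg_cong[OF e1(2), of "\<lambda>z. z * norm (x - xs)"] by (simp add: algebra_simps)
    ultimately show ?thesis
      unfolding penalty_def penalty_dir_deriv_def using feasible(2) by simp
  qed
  moreover have "0 < min d1 d2" using d1(1) d2(1) by simp
  ultimately show ?thesis using that by blast
qed

lemma infdist_G_upper_hadamard:
  assumes e: "0 < e"
  obtains d where "0 < d" "\<And>t h'. 0 < t \<Longrightarrow> t < d \<Longrightarrow> norm (h' - h) < d \<Longrightarrow>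
    infdist (G (xs + t *\<^sub>R h')) K \<le> t * (infdist (DG xs h) TK + e)"
proof -
  obtain d0 where d0: "0 < d0" "\<And>t. 0 < t \<Longrightarrow> t < d0 \<Longrightarrow>
      infdist (G xs + t *\<^sub>R DG xs h) K \<le> t * (infdist (DG xs h) TK + e / 2)"
    using infdist_convex_dir_upper[OF K(2) feasible(2), of "e / 2" "DG xs h"] e by auto
  define e1 where "e1 = e / (4 * (norm h + 1))"
  have "0 < norm h + 1" by (simp add: add_nonneg_pos)
  then have e1: "0 < e1" "e1 * (norm h + 1) = e / 4" using e unfolding e1_def by (simp_all add: field_simps)
  obtain d1 where d1: "0 < d1" "\<And>x. norm (x - xs) < d1 \<Longrightarrow> norm (G x - G xs - DG xs (x - xs)) \<le> e1 * norm (x - xs)"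
    using G_diff[of xs] e1(1) unfolding has_derivative_at_alt by blast
  define d where "d = min 1 (min d0 (min (d1 / (norm h + 1)) (e / (4 * (norm (DG xs) + 1)))))"
  have "infdist (G (xs + t *\<^sub>R h')) K \<le> t * (infdist (DG xs h) TK + e)"
    if t: "0 < t" "t < d" and h': "norm (h' - h) < d" for t h'
  proof -
    have "norm h' \<le> norm h + 1" using h' norm_triangle_ineq2[of h' h] unfolding d_def by linarith
    then have th': "t * norm h' \<le> t * (norm h + 1)" using t by (simp add: mult_left_mono)
    also have "\<dots> < d1" using t unfolding d_def by (simp add: pos_less_divide_eq add_nonneg_pos)
    finally have "norm (G (xs + t *\<^sub>R h') - G xs - t *\<^sub>R DG xs h') \<le> e1 * (t * norm h')"
      using d1(2)[of "xs + t *\<^sub>R h'"] t by (simp add: blinfun.scaleR_right)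
    also have "\<dots> \<le> e1 * (t * (norm h + 1))" by (rule mult_left_mono) (use th' e1(1) in auto)
    also have "\<dots> = t * (e / 4)" by (simp add: e1(2)[symmetric] ac_simps)
    finally have G_lin: "norm (G (xs + t *\<^sub>R h') - G xs - t *\<^sub>R DG xs h') \<le> t * (e / 4)" .
    have "norm (DG xs (h' - h)) \<le> norm (DG xs) * norm (h' - h)" by (rule norm_blinfun)
    also have "\<dots> \<le> (norm (DG xs) + 1) * (e / (4 * (norm (DG xs) + 1)))"
      using h' unfolding d_def by (intro mult_mono) auto
    also have "\<dots> = e / 4"
    proof -
      have "norm (DG xs) + 1 \<noteq> 0" using norm_ge_zero[of "DG xs"] by linarith
      then show ?thesis by (simp add: field_simps)
    qed
    finally have "norm (t *\<^sub>R DG xs (h' - h)) \<le> t * (e / 4)"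
      using t by (simp add: mult_left_mono)
    with G_lin have "dist (G (xs + t *\<^sub>R h')) (G xs + t *\<^sub>R DG xs h) \<le> t * (e / 2)"
      using norm_triangle_ineq[of "G (xs + t *\<^sub>R h') - G xs - t *\<^sub>R DG xs h'" "t *\<^sub>R DG xs (h' - h)"]
      by (simp add: dist_norm blinfun.diff_right algebra_simps)
    moreover have "infdist (G xs + t *\<^sub>R DG xs h) K \<le> t * (infdist (DG xs h) TK + e / 2)"
      using d0(2) t unfolding d_def by simp
    moreover note infdist_triangle[of "G (xs + t *\<^sub>R h')" K "G xs + t *\<^sub>R DG xs h"]
    ultimately show ?thesis by (simp add: algebra_simps)
  qed
  moreover have "0 < d" unfolding d_def using d0(1) d1(1) e by (simp add: add_nonneg_pos)
  ultimately show ?thesis using that by blast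
qed

lemma penalty_upper_estimate:
  assumes c: "0 \<le> c" and e: "0 < e"
  obtains d where "0 < d" "\<And>t h'. 0 < t \<Longrightarrow> t < d \<Longrightarrow> norm (h' - h) < d \<Longrightarrow>
    \<Phi> c (xs + t *\<^sub>R h') \<le> \<Phi> c xs + t * (penalty_dir_deriv c h + e)"
proof -
  obtain d1 where d1: "0 < d1" "\<And>t h'. 0 < t \<Longrightarrow> t < d1 \<Longrightarrow> norm (h' - h) < d1 \<Longrightarrow>
      F (xs + t *\<^sub>R h') \<le> F xs + t * (F' xs h + e / 2)"
    using maxfun_upper_hadamard[of "e / 2"] e by auto
  obtain d2 where d2: "0 < d2" "\<And>t h'. 0 < t \<Longrightarrow> t < d2 \<Longrightarrow> norm (h' - h) < d2 \<Longrightarrow>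
      infdist (G (xs + t *\<^sub>R h')) K \<le> t * (infdist (DG xs h) TK + e / (2 * (c + 1)))"
    using infdist_G_upper_hadamard[of "e / (2 * (c + 1))"] e c by (auto simp: add_nonneg_pos)
  have "\<Phi> c (xs + t *\<^sub>R h') \<le> \<Phi> c xs + t * (penalty_dir_deriv c h + e)"
    if "0 < t" "t < min d1 d2" "norm (h' - h) < min d1 d2" for t h'
  proof -
    have "c * infdist (G (xs + t *\<^sub>R h')) K \<le> c * (t * (infdist (DG xs h) TK + e / (2 * (c + 1))))"
      using d2(2)[of t h'] that c by (intro mult_left_mono) auto
    also have "\<dots> \<le> t * (c * infdist (DG xs h) TK + e / 2)"
      using that c e by (simp add: field_simps mult_left_mono)
    finally show ?thesis using d1(2)[of t h'] that feasible(2)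
      unfolding penalty_def penalty_dir_deriv_def by (simp add: algebra_simps)
  qed
  moreover have "0 < min d1 d2" using d1(1) d2(1) by simp
  ultimately show ?thesis using that by blast
qed

lemma dir_deriv_growth_of_first_order_growth:
  assumes c: "0 \<le> c" and growth: "first_order_growth_on (\<Phi> c) A xs"
  shows "dir_deriv_growth c"
proof -
  obtain \<rho> U where g: "0 < \<rho>" "open U" "xs \<in> U"
    "\<And>x. x \<in> U \<inter> A \<Longrightarrow> \<Phi> c xs + \<rho> * norm (x - xs) \<le> \<Phi> c x"
    using growth unfolding first_order_growth_on_def by blast
  have "\<rho> * norm h \<le> penalty_dir_deriv c h + e" if h: "h \<in> TA" and e: "0 < e" for h e
  proof -
    obtain \<alpha> :: "nat \<Rightarrow> real" and hs where \<alpha>: "\<forall>n. 0 < \<alpha> n" "\<alpha> \<longlonglongrightarrow> 0" "hs \<longlonglongrightarrow> h"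
      "\<forall>n. xs + \<alpha> n *\<^sub>R hs n \<in> A"
      using h unfolding contingent_cone_def by blast
    obtain d where d: "0 < d" "\<And>t h'. 0 < t \<Longrightarrow> t < d \<Longrightarrow> norm (h' - h) < d \<Longrightarrow>
        \<Phi> c (xs + t *\<^sub>R h') \<le> \<Phi> c xs + t * (penalty_dir_deriv c h + e)"
      using penalty_upper_estimate[OF c e] by blast
    have "(\<lambda>n. xs + \<alpha> n *\<^sub>R hs n) \<longlonglongrightarrow> xs + 0 *\<^sub>R h" using \<alpha>(2,3) by (intro tendsto_intros)
    then have "\<forall>\<^sub>F n in sequentially. xs + \<alpha> n *\<^sub>R hs n \<in> U" using g(2,3) by (simp add: topological_tendstoD)
    moreover have "\<forall>\<^sub>F n in sequentially. \<alpha> n < d" using order_tendstoD(2)[OF \<alpha>(2) d(1)] .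
    moreover have "\<forall>\<^sub>F n in sequentially. norm (hs n - h) < d"
      using tendstoD[OF \<alpha>(3) d(1)] by (simp add: dist_norm)
    ultimately have "\<forall>\<^sub>F n in sequentially. \<rho> * norm (hs n) \<le> penalty_dir_deriv c h + e"
    proof eventually_elim
      case (elim n)
      have "0 < \<alpha> n" using \<alpha>(1) by blast
      have "\<Phi> c xs + \<rho> * (\<alpha> n * norm (hs n)) \<le> \<Phi> c (xs + \<alpha> n *\<^sub>R hs n)"
        using g(4)[of "xs + \<alpha> n *\<^sub>R hs n"] elim \<alpha>(4) \<open>0 < \<alpha> n\<close> by simp
      moreover have "\<Phi> c (xs + \<alpha> n *\<^sub>R hs n) \<le> \<Phi> c xs + \<alpha> n * (penalty_dir_deriv c h + e)"
        using d(2) elim \<open>0 < \<alpha> n\<close> by blast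
      ultimately have "\<alpha> n * (\<rho> * norm (hs n)) \<le> \<alpha> n * (penalty_dir_deriv c h + e)"
        by (simp add: algebra_simps)
      then show ?case using \<open>0 < \<alpha> n\<close> by simp
    qed
    moreover have "(\<lambda>n. \<rho> * norm (hs n)) \<longlonglongrightarrow> \<rho> * norm h" using \<alpha>(3) by (intro tendsto_intros)
    ultimately show ?thesis by (simp add: LIMSEQ_le_const2 eventually_sequentially)
  qed
  then show ?thesis
    unfolding dir_deriv_growth_def using g(1) by (blast intro: field_le_epsilon)
qed

lemma first_order_growth_of_dir_deriv_growth:
  assumes c: "0 \<le> c" and growth: "dir_deriv_growth c"
  shows "first_order_growth_on (\<Phi> c) A xs"
proof -
  obtain \<delta> where \<delta>: "0 < \<delta>" "\<And>h. h \<in> TA \<Longrightarrow> \<delta> * norm h \<le> penalty_dir_deriv c h"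
    using growth unfolding dir_deriv_growth_def by blast
  obtain d where d: "0 < d" "\<And>x. norm (x - xs) < d \<Longrightarrow>
      \<Phi> c xs + penalty_dir_deriv c (x - xs) - \<delta> / 2 * norm (x - xs) \<le> \<Phi> c x"
    using penalty_lower_estimate[OF c, of "\<delta> / 2"] \<delta>(1) by auto
  have "\<Phi> c xs + \<delta> / 2 * norm (x - xs) \<le> \<Phi> c x" if "x \<in> ball xs d \<inter> A" for x
    using d(2)[of x] \<delta>(2)[OF diff_in_contingent_cone[OF A(2) feasible(1)], of x] that
    by (simp add: dist_norm norm_minus_commute)
  then show ?thesis
    unfolding first_order_growth_on_def using \<delta>(1) d(1)
    by (intro exI[of _ "\<delta> / 2"] conjI exI[of _ "ball xs d"]) auto
qed

theorem first_order_growth_iff_dir_deriv_growth: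
  "0 \<le> c \<Longrightarrow> first_order_growth_on (\<Phi> c) A xs \<longleftrightarrow> dir_deriv_growth c"
  using dir_deriv_growth_of_first_order_growth first_order_growth_of_dir_deriv_growth by blast

text \<open>Compactness of the unit sphere in \<open>T_A(xs)\<close>: at each unit direction either \<open>F'\<close> is positive or
  the distance term is, and then a large multiple of it dominates.\<close>

lemma dir_deriv_growth_of_sufficient_condition:
  assumes suff: "\<forall>h\<in>TA - {0}. DG xs h \<in> TK \<longrightarrow> 0 < F' xs h"
  shows "\<exists>c\<ge>0. dir_deriv_growth c"
proof -
  define S where "S = TA \<inter> sphere 0 1"
  have "compact S" unfolding S_def using closed_TA by (intro closed_Int_compact compact_sphere)
  have "S \<subseteq> (\<Union>n. {h. 0 < penalty_dir_deriv (real n) h})"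
  proof
    fix h assume h: "h \<in> S"
    show "h \<in> (\<Union>n. {h. 0 < penalty_dir_deriv (real n) h})"
    proof (cases "DG xs h \<in> TK")
      case True
      then have "0 < penalty_dir_deriv (real 0) h" using suff h unfolding S_def penalty_dir_deriv_def by auto
      then show ?thesis by blast
    next
      case False
      then have pos: "0 < infdist (DG xs h) TK"
        using closed_TK convex_cone_nonempty[OF convex_cone_TK] by (rule infdist_pos_not_in_closed[rotated -1])
      obtain n :: nat where "\<bar>F' xs h\<bar> / infdist (DG xs h) TK < real n" using reals_Archimedean2 by blast
      then have "0 < penalty_dir_deriv (real n) h"
        using pos unfolding penalty_dir_deriv_def by (simp add: divide_less_eq abs_less_iff)
      then show ?thesis by blast
    qed
  qed
  moreover have "open {h. 0 < penalty_dir_deriv (real n) h}" for n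
    by (intro open_Collect_less continuous_on_const continuous_on_penalty_dir_deriv)
  ultimately obtain N where N: "finite N" "S \<subseteq> (\<Union>n\<in>N. {h. 0 < penalty_dir_deriv (real n) h})"
    using compactE_image[OF \<open>compact S\<close>, of UNIV] by (metis (no_types, lifting) image_UN)
  define c where "c = real (Max (insert 0 N))"
  have "0 < penalty_dir_deriv c h" if "h \<in> TA" "norm h = 1" for h
  proof -
    have "h \<in> S" using that unfolding S_def by simp
    then obtain n where "n \<in> N" "0 < penalty_dir_deriv (real n) h" using N(2) by blast
    moreover have "real n \<le> c" unfolding c_def using N(1) \<open>n \<in> N\<close> by simp
    ultimately show ?thesis using penalty_dir_deriv_mono by (meson less_le_trans)
  qed
  then have "dir_deriv_growth c" by (rule dir_deriv_growthI_sphere)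
  then show ?thesis unfolding c_def using of_nat_0_le_iff by blast
qed

lemma sufficient_condition_of_dir_deriv_growth:
  assumes "\<exists>c\<ge>0. dir_deriv_growth c"
  shows "\<forall>h\<in>TA - {0}. DG xs h \<in> TK \<longrightarrow> 0 < F' xs h"
proof -
  obtain c \<delta> where \<delta>: "0 < \<delta>" "\<And>h. h \<in> TA \<Longrightarrow> \<delta> * norm h \<le> penalty_dir_deriv c h"
    using assms unfolding dir_deriv_growth_def by blast
  show ?thesis
  proof (intro ballI impI)
    fix h assume h: "h \<in> TA - {0}" "DG xs h \<in> TK"
    then have "penalty_dir_deriv c h = F' xs h" by (simp add: penalty_dir_deriv_def)
    moreover have "0 < \<delta> * norm h" using h \<delta>(1) by simp
    ultimately show "0 < F' xs h" using \<delta>(2)[of h] h by simp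
  qed
qed

theorem sufficient_condition_iff_dir_deriv_growth:
  "(\<forall>h\<in>TA - {0}. DG xs h \<in> TK \<longrightarrow> 0 < F' xs h) \<longleftrightarrow> (\<exists>c\<ge>0. dir_deriv_growth c)"
  using dir_deriv_growth_of_sufficient_condition sufficient_condition_of_dir_deriv_growth by blast

subsection \<open>Robinson's constraint qualification\<close>

definition linearized_image :: "nat \<Rightarrow> 'b set"
  where "linearized_image m = {DG xs (a - xs) - (k - G xs) | a k. a \<in> A \<and> norm (a - xs) \<le> real m \<and> k \<in> K}"

lemma linearized_image_sums:
  "linearized_image m =
    (\<Union>u\<in>(\<lambda>a. DG xs (a - xs)) ` (A \<inter> cball xs (real m)). \<Union>v\<in>(+) (G xs) ` uminus ` K. {u + v})"
  unfolding linearized_image_def by (force simp: dist_norm norm_minus_commute algebra_simps)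

lemma closed_linearized_image: "closed (linearized_image m)"
  unfolding linearized_image_sums
  by (intro compact_closed_sums compact_continuous_image closed_Int_compact A(1) compact_cball
      closed_translation closed_negations K(1) continuous_intros linear_continuous_on blinfun.bounded_linear_right)

lemma convex_linearized_image: "convex (linearized_image m)"
proof -
  have "(\<lambda>a. DG xs (a - xs)) ` (A \<inter> cball xs (real m)) = DG xs ` (\<lambda>a. a - xs) ` (A \<inter> cball xs (real m))"
    by (auto simp: image_image)
  then have "convex ((\<lambda>a. DG xs (a - xs)) ` (A \<inter> cball xs (real m)))"
    using A(2) by (auto intro!: convex_linear_image convex_translation_subtract convex_Int
        bounded_linear.linear[OF blinfun.bounded_linear_right])
  then show ?thesis unfolding linearized_image_sums
    by (intro convex_sums convex_translation convex_negations K(2))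
qed

lemma linearized_image_mono: "m \<le> m' \<Longrightarrow> linearized_image m \<subseteq> linearized_image m'"
  unfolding linearized_image_def by force

lemma robinson_cq_cover:
  assumes "robinson_cq A G DG K xs"
  obtains r0 where "0 < r0" "ball 0 r0 \<subseteq> (\<Union>m. linearized_image m)"
proof -
  obtain r0 where r0: "0 < r0" "ball 0 r0 \<subseteq> {G xs + DG xs (a - xs) - k | a k. a \<in> A \<and> k \<in> K}"
    using assms unfolding robinson_cq_def mem_interior by blast
  have "ball 0 r0 \<subseteq> (\<Union>m. linearized_image m)"
  proof
    fix y :: 'b assume "y \<in> ball 0 r0"
    then obtain a k where ak: "a \<in> A" "k \<in> K" "y = G xs + DG xs (a - xs) - k" using r0(2) by blast
    obtain m :: nat where "norm (a - xs) \<le> real m" using real_arch_simple by blast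
    then have "y \<in> linearized_image m" unfolding linearized_image_def using ak by (force simp: algebra_simps)
    then show "y \<in> (\<Union>m. linearized_image m)" by blast
  qed
  with r0(1) show ?thesis by (rule that)
qed

lemma linearized_image_interior:
  assumes "robinson_cq A G DG K xs"
  shows "\<exists>m p s. 0 < s \<and> ball p s \<subseteq> linearized_image m"
proof -
  obtain r0 where r0: "0 < r0" "ball 0 r0 \<subseteq> (\<Union>m. linearized_image m)"
    using robinson_cq_cover[OF assms] by blast
  have "\<exists>m. interior (linearized_image m) \<noteq> {}"
  proof (rule ccontr)
    assume "\<nexists>m. interior (linearized_image m) \<noteq> {}"
    then have empty: "interior (linearized_image m) = {}" for m by blast
    have "euclidean interior_of (\<Union>m. linearized_image m) = {}"
    proof (rule Baire_category_alt)
      show "completely_metrizable_space (euclidean :: 'b topology) \<or>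
          locally_compact_space (euclidean :: 'b topology) \<and> regular_space (euclidean :: 'b topology)"
        using completely_metrizable_space_euclidean by blast
      show "closedin euclidean T \<and> euclidean interior_of T = {}" if "T \<in> range linearized_image" for T
        using that closed_linearized_image empty closed_closedin by auto
    qed simp
    moreover have "ball 0 r0 \<subseteq> interior (\<Union>m. linearized_image m)" using r0(2) by (intro interior_maximal) auto
    ultimately show False using r0(1) by simp
  qed
  then show ?thesis by (meson ex_in_conv mem_interior)
qed

text \<open>Baire's theorem gives a ball inside some \<open>linearized_image m\<close>; by convexity it can be moved
  to the origin, using that \<open>- t p\<close> is covered for small \<open>t\<close>.\<close>

lemma robinson_cq_ball:
  assumes "robinson_cq A G DG K xs"
  obtains r m where "0 < r" "ball 0 r \<subseteq> linearized_image m"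
proof -
  obtain r0 where r0: "0 < r0" "ball 0 r0 \<subseteq> (\<Union>m. linearized_image m)"
    using robinson_cq_cover[OF assms] by blast
  obtain m p s where ps: "0 < s" "ball p s \<subseteq> linearized_image m"
    using linearized_image_interior[OF assms] by blast
  define t where "t = r0 / (2 * (norm p + 1))"
  have t: "0 < t" "t * norm p < r0"
  proof -
    have "0 < norm p + 1" by (simp add: add_nonneg_pos)
    then show "0 < t" using r0(1) by (simp add: t_def)
    have "t * norm p \<le> t * (norm p + 1)" using \<open>0 < t\<close> by simp
    also have "\<dots> = r0 / 2" using \<open>0 < norm p + 1\<close> by (simp add: t_def field_simps)
    finally show "t * norm p < r0" using r0(1) by simp
  qed
  then obtain j where "- t *\<^sub>R p \<in> linearized_image j" using r0(2) by (force simp: dist_norm)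
  then have "ball 0 (t * s / (1 + t)) \<subseteq> linearized_image (max m j)"
    using ps t linearized_image_mono[of m "max m j"] linearized_image_mono[of j "max m j"]
    by (intro convex_ball_shrink_0[OF convex_linearized_image]) auto
  moreover have "0 < t * s / (1 + t)" using ps(1) t(1) by simp
  ultimately show ?thesis by (rule that[rotated])
qed

text \<open>Rescale, towards \<open>(x, k)\<close>, a preimage of the shifted target taken from the ball of
  \<open>robinson_cq_ball\<close>.\<close>

lemma linearized_solvability:
  assumes "robinson_cq A G DG K xs"
  obtains r \<delta> \<kappa> where "0 < r" "0 < \<delta>" "0 < \<kappa>"
    "\<And>x k y. x \<in> A \<Longrightarrow> k \<in> K \<Longrightarrow> norm (x - xs) < \<delta> \<Longrightarrow> norm (k - G xs) < \<delta> \<Longrightarrow> norm y \<le> r \<Longrightarrow>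
      \<exists>x'\<in>A. \<exists>k'\<in>K. DG xs (x' - x) - (k' - k) = y \<and> norm (x' - x) \<le> \<kappa> * norm y"
proof -
  obtain r m where r: "0 < r" "ball 0 r \<subseteq> linearized_image m" using robinson_cq_ball[OF assms] by blast
  define \<delta> where "\<delta> = r / (4 * (norm (DG xs) + 1))"
  define \<kappa> where "\<kappa> = 4 * (real m + \<delta>) / r"
  have "0 < norm (DG xs) + 1" by (simp add: add_nonneg_pos)
  then have \<delta>: "0 < \<delta>" "(norm (DG xs) + 1) * \<delta> = r / 4" using r(1) by (simp_all add: \<delta>_def field_simps)
  have "\<exists>x'\<in>A. \<exists>k'\<in>K. DG xs (x' - x) - (k' - k) = y \<and> norm (x' - x) \<le> \<kappa> * norm y"
    if x: "x \<in> A" "norm (x - xs) < \<delta>" and k: "k \<in> K" "norm (k - G xs) < \<delta>" and y: "norm y \<le> r / 4" for x k y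
  proof (cases "y = 0")
    case True
    then show ?thesis using x k by auto
  next
    case False
    define \<mu> where "\<mu> = 4 * norm y / r"
    have \<mu>: "0 < \<mu>" "\<mu> \<le> 1" using False r y by (auto simp: \<mu>_def)
    define w where "w = DG xs (x - xs) - (k - G xs)"
    have "norm w \<le> norm (DG xs) * norm (x - xs) + norm (k - G xs)"
      unfolding w_def using norm_triangle_ineq4 norm_blinfun order_trans add_right_mono by metis
    also have "\<dots> \<le> norm (DG xs) * \<delta> + \<delta>" using x(2) k(2) by (intro add_mono mult_left_mono) auto
    finally have "norm w \<le> r / 4" using \<delta>(2) by (simp add: algebra_simps)
    moreover have "norm ((1 / \<mu>) *\<^sub>R y) = r / 4" using False r unfolding \<mu>_def by simp
    ultimately have "norm ((1 / \<mu>) *\<^sub>R y + w) < r"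
      using norm_triangle_ineq[of "(1 / \<mu>) *\<^sub>R y" w] r(1) by linarith
    then obtain a k'' where ak: "a \<in> A" "norm (a - xs) \<le> real m" "k'' \<in> K"
      "(1 / \<mu>) *\<^sub>R y + w = DG xs (a - xs) - (k'' - G xs)"
      using r(2) unfolding linearized_image_def by (force simp: dist_norm)
    define x' where "x' = (1 - \<mu>) *\<^sub>R x + \<mu> *\<^sub>R a"
    define k' where "k' = (1 - \<mu>) *\<^sub>R k + \<mu> *\<^sub>R k''"
    have "x' \<in> A" "k' \<in> K" unfolding x'_def k'_def using A(2) K(2) x k ak \<mu> by (auto intro: convexD)
    moreover have "DG xs (x' - x) - (k' - k) = \<mu> *\<^sub>R (DG xs (a - xs) - (k'' - G xs) - w)"
      unfolding x'_def k'_def w_def by (simp add: blinfun.diff_right blinfun.scaleR_right algebra_simps)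
    then have "DG xs (x' - x) - (k' - k) = y" using \<mu>(1) by (simp add: ak(4)[symmetric])
    moreover have "norm (x' - x) \<le> \<kappa> * norm y"
    proof -
      have "x' - x = \<mu> *\<^sub>R (a - x)" unfolding x'_def by (simp add: algebra_simps)
      then have "norm (x' - x) = \<mu> * norm (a - x)" using \<mu>(1) by simp
      also have "\<dots> \<le> \<mu> * (real m + \<delta>)"
        using norm_triangle_ineq4[of "a - xs" "x - xs"] ak(2) x(2) \<mu>(1) by (intro mult_left_mono) auto
      also have "\<dots> = \<kappa> * norm y" by (simp add: \<kappa>_def \<mu>_def)
      finally show ?thesis .
    qed
    ultimately show ?thesis by blast
  qed
  moreover have "0 < \<kappa>" using r(1) \<delta>(1) by (simp add: \<kappa>_def add_nonneg_pos)
  ultimately show ?thesis using that[of "r / 4" \<delta> \<kappa>] r(1) \<delta>(1) by auto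
qed

lemma continuous_on_G: "continuous_on S G"
  using G_diff by (meson continuous_at_imp_continuous_on has_derivative_continuous)

lemma robinson_newton_step:
  assumes solve: "\<And>x k y. x \<in> A \<Longrightarrow> k \<in> K \<Longrightarrow> norm (x - xs) < \<delta> \<Longrightarrow> norm (k - G xs) < \<delta> \<Longrightarrow> norm y \<le> r \<Longrightarrow>
      \<exists>x'\<in>A. \<exists>k'\<in>K. DG xs (x' - x) - (k' - k) = y \<and> norm (x' - x) \<le> \<kappa> * norm y"
    and strict: "\<And>x x'. x \<in> ball xs d \<Longrightarrow> x' \<in> ball xs d \<Longrightarrow>
      norm (G x' - G x - DG xs (x' - x)) \<le> 1 / (2 * \<kappa>) * norm (x' - x)"
    and \<kappa>: "0 < \<kappa>"
    and p: "x \<in> A" "k \<in> K" "norm (x - xs) < \<delta>" "norm (k - G xs) < \<delta>" "norm (G x - k) \<le> r"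
      "norm (x - xs) + \<kappa> * norm (G x - k) < d"
  obtains x' k' where "x' \<in> A" "k' \<in> K"
    "norm ((x', k') - (x, k)) \<le> ((1 + norm (DG xs)) * \<kappa> + 1) * norm (G x - k)"
    "norm (G x' - k') \<le> norm (G x - k) / 2"
proof -
  have "norm (- (G x - k)) \<le> r" using p(5) by (simp only: norm_minus_cancel)
  from solve[OF p(1-4) this] obtain x' k' where x'k': "x' \<in> A" "k' \<in> K"
    "DG xs (x' - x) - (k' - k) = - (G x - k)" "norm (x' - x) \<le> \<kappa> * norm (G x - k)"
    by (auto simp only: norm_minus_cancel)
  have "norm (x' - xs) \<le> norm (x' - x) + norm (x - xs)" using norm_triangle_ineq[of "x' - x" "x - xs"] by simp
  moreover have "0 \<le> \<kappa> * norm (G x - k)" using \<kappa> by simp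
  ultimately have "norm (x - xs) < d" "norm (x' - xs) < d" using p(6) x'k'(4) by linarith+
  then have "x \<in> ball xs d" "x' \<in> ball xs d" by (simp_all add: dist_norm norm_minus_commute)
  moreover have "G x' - k' = G x' - G x - DG xs (x' - x)" using x'k'(3) by (simp add: algebra_simps)
  ultimately have "norm (G x' - k') \<le> 1 / (2 * \<kappa>) * norm (x' - x)" by (metis strict)
  also have "\<dots> \<le> 1 / (2 * \<kappa>) * (\<kappa> * norm (G x - k))" using x'k'(4) \<kappa> by (intro mult_left_mono) auto
  also have "\<dots> = norm (G x - k) / 2" using \<kappa> by simp
  finally have residual: "norm (G x' - k') \<le> norm (G x - k) / 2" .
  have "k' - k = DG xs (x' - x) + (G x - k)" using x'k'(3) by (simp add: algebra_simps)
  then have "norm (k' - k) \<le> norm (DG xs (x' - x)) + norm (G x - k)" by (metis norm_triangle_ineq)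
  moreover have "norm (DG xs (x' - x)) \<le> norm (DG xs) * (\<kappa> * norm (G x - k))"
    using norm_blinfun[of "DG xs" "x' - x"] x'k'(4) by (meson mult_left_mono norm_ge_zero order_trans)
  moreover have "((1 + norm (DG xs)) * \<kappa> + 1) * norm (G x - k) =
      \<kappa> * norm (G x - k) + norm (DG xs) * (\<kappa> * norm (G x - k)) + norm (G x - k)"
    by (simp add: algebra_simps)
  ultimately have "norm (x' - x) + norm (k' - k) \<le> ((1 + norm (DG xs)) * \<kappa> + 1) * norm (G x - k)"
    using x'k'(4) by linarith
  then have "norm ((x', k') - (x, k)) \<le> ((1 + norm (DG xs)) * \<kappa> + 1) * norm (G x - k)"
    using norm_Pair_le[of "x' - x" "k' - k"] by simp
  with x'k'(1,2) show ?thesis using residual by (rule that)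
qed

text \<open>Start from \<open>(x0, k0)\<close> with \<open>k0 \<in> K\<close> almost nearest to \<open>G x0\<close>; the Newton-type steps on
  \<open>A \<times> K\<close> converge to a feasible point.\<close>

lemma robinson_feasible_point:
  assumes solve: "\<And>x k y. x \<in> A \<Longrightarrow> k \<in> K \<Longrightarrow> norm (x - xs) < \<delta>1 \<Longrightarrow> norm (k - G xs) < \<delta>1 \<Longrightarrow>
      norm y \<le> r \<Longrightarrow> \<exists>x'\<in>A. \<exists>k'\<in>K. DG xs (x' - x) - (k' - k) = y \<and> norm (x' - x) \<le> \<kappa>1 * norm y"
    and strict: "\<And>x x'. x \<in> ball xs d2 \<Longrightarrow> x' \<in> ball xs d2 \<Longrightarrow>
      norm (G x' - G x - DG xs (x' - x)) \<le> 1 / (2 * \<kappa>1) * norm (x' - x)"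
    and \<kappa>1: "0 < \<kappa>1" and \<kappa>: "\<kappa> = (1 + norm (DG xs)) * \<kappa>1 + 1" and D: "D \<le> \<delta>1" "D \<le> d2"
    and \<gamma>: "2 * \<gamma> \<le> r" "4 * (\<kappa> * \<gamma>) \<le> D / 4" "2 * (\<kappa>1 * \<gamma>) \<le> D / 2" "4 * (\<kappa> * \<gamma>) + 3 * \<gamma> < D"
    and x0: "x0 \<in> A" "norm (x0 - xs) < D / 4" "norm (G x0 - G xs) < \<gamma>"
  obtains z where "z \<in> A" "G z \<in> K" "norm (z - x0) \<le> 4 * \<kappa> * infdist (G x0) K"
proof (cases "infdist (G x0) K = 0")
  case True
  then show ?thesis using that x0(1) in_closed_iff_infdist_zero[OF K(1)] feasible(2) by auto
next
  case False
  define e0 where "e0 = infdist (G x0) K"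
  define \<rho> where "\<rho> p = norm (G (fst p) - snd p)" for p :: "'a \<times> 'b"
  have "0 < e0" using False infdist_nonneg unfolding e0_def by (metis less_eq_real_def)
  obtain k0 where k0: "k0 \<in> K" "dist (G x0) k0 < 2 * e0"
    using infdist_lessE[of "G x0" K "2 * e0"] feasible(2) \<open>0 < e0\<close> unfolding e0_def by auto
  have "e0 \<le> norm (G x0 - G xs)" using infdist_le[OF feasible(2)] unfolding e0_def by (simp add: dist_norm)
  then have \<rho>0: "\<rho> (x0, k0) < 2 * \<gamma>" "\<rho> (x0, k0) \<le> 2 * e0"
    using k0(2) x0(3) unfolding \<rho>_def by (simp_all add: dist_norm)
  have \<kappa>_pos: "1 \<le> \<kappa>" using \<kappa> \<kappa>1 by simp
  have "0 < \<gamma>" using x0(3) norm_ge_zero order_le_less_trans by blast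
  then have "0 \<le> \<kappa> * \<gamma>" using \<kappa>_pos by simp
  have step: "\<exists>p'\<in>A \<times> K. norm (p' - p) \<le> \<kappa> * \<rho> p \<and> \<rho> p' \<le> \<rho> p / 2"
    if p: "p \<in> A \<times> K" "norm (p - (x0, k0)) \<le> 2 * \<kappa> * \<rho> (x0, k0)" "\<rho> p \<le> \<rho> (x0, k0)" for p
  proof -
    obtain x k where [simp]: "p = (x, k)" by fastforce
    have "\<kappa> * \<rho> (x0, k0) \<le> \<kappa> * (2 * \<gamma>)" using \<rho>0(1) \<kappa>_pos by (intro mult_left_mono) auto
    moreover have "norm (p - (x0, k0)) \<le> 2 * (\<kappa> * \<rho> (x0, k0))" using p(2) by (simp add: mult.assoc)
    ultimately have near: "norm (p - (x0, k0)) \<le> 4 * (\<kappa> * \<gamma>)" by simp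
    have "norm (x - x0) \<le> norm (p - (x0, k0))" "norm (k - k0) \<le> norm (p - (x0, k0))"
      using norm_fst_le[of "x - x0" "k - k0"] norm_snd_le[of "k - k0" "x - x0"] by simp_all
    moreover have "norm (x - xs) \<le> norm (x - x0) + norm (x0 - xs)"
      using norm_triangle_ineq[of "x - x0" "x0 - xs"] by simp
    moreover have "norm (k - G xs) \<le> norm (k - k0) + norm (G x0 - k0) + norm (G x0 - G xs)"
      using norm_triangle_ineq[of "k - k0" "k0 - G x0"] norm_triangle_ineq[of "k - G x0" "G x0 - G xs"]
      by (simp add: norm_minus_commute[of k0])
    moreover have "\<kappa>1 * norm (G x - k) \<le> 2 * (\<kappa>1 * \<gamma>)" using p(3) \<rho>0(1) \<kappa>1 unfolding \<rho>_def by simp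
    moreover have "\<rho> (x0, k0) = norm (G x0 - k0)" "\<rho> p = norm (G x - k)" by (simp_all add: \<rho>_def)
    ultimately have conds: "norm (x - xs) < \<delta>1" "norm (k - G xs) < \<delta>1" "norm (G x - k) \<le> r"
      "norm (x - xs) + \<kappa>1 * norm (G x - k) < d2"
      using near p(3) x0(2,3) \<rho>0(1) \<gamma> D \<open>0 \<le> \<kappa> * \<gamma>\<close> \<open>0 < \<gamma>\<close> by linarith+
    have "x \<in> A" "k \<in> K" using p(1) by auto
    from robinson_newton_step[OF solve strict \<kappa>1 this conds] obtain x' k' where "x' \<in> A" "k' \<in> K"
      "norm ((x', k') - (x, k)) \<le> \<kappa> * norm (G x - k)" "norm (G x' - k') \<le> norm (G x - k) / 2"
      unfolding \<kappa> by blast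
    then show ?thesis unfolding \<rho>_def by force
  qed
  have "continuous_on (A \<times> K) \<rho>"
    unfolding \<rho>_def by (intro continuous_intros continuous_on_compose2[OF continuous_on_G[of UNIV]]) auto
  then obtain p where p: "p \<in> A \<times> K" "\<rho> p = 0" "norm (p - (x0, k0)) \<le> 2 * \<kappa> * \<rho> (x0, k0)"
    using residual_iteration_zero[of "A \<times> K" \<rho> "(x0, k0)" \<kappa>, OF closed_Times[OF A(1) K(1)]]
      x0(1) k0(1) \<kappa>_pos step unfolding \<rho>_def by force
  obtain z kz where [simp]: "p = (z, kz)" by fastforce
  have "norm (z - x0) \<le> norm (p - (x0, k0))" using norm_fst_le[of "z - x0" "kz - k0"] by simp
  also have "\<dots> \<le> 2 * \<kappa> * \<rho> (x0, k0)" using p(3) by simp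
  also have "\<dots> \<le> 2 * \<kappa> * (2 * e0)" using \<rho>0(2) \<kappa>_pos by (intro mult_left_mono) auto
  finally show ?thesis using that p(1,2) unfolding \<rho>_def e0_def by auto
qed

theorem robinson_error_bound:
  assumes rcq: "robinson_cq A G DG K xs"
  obtains \<kappa> where "0 < \<kappa>" "local_error_bound {x \<in> A. G x \<in> K} A (\<lambda>x. infdist (G x) K) xs \<kappa>"
proof -
  obtain r \<delta>1 \<kappa>1 where pos: "0 < r" "0 < \<delta>1" "0 < \<kappa>1" and solve:
    "\<And>x k y. x \<in> A \<Longrightarrow> k \<in> K \<Longrightarrow> norm (x - xs) < \<delta>1 \<Longrightarrow> norm (k - G xs) < \<delta>1 \<Longrightarrow> norm y \<le> r \<Longrightarrow>
      \<exists>x'\<in>A. \<exists>k'\<in>K. DG xs (x' - x) - (k' - k) = y \<and> norm (x' - x) \<le> \<kappa>1 * norm y"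
    using linearized_solvability[OF rcq] by blast
  obtain d2 where d2: "0 < d2" "\<And>x x'. x \<in> ball xs d2 \<Longrightarrow> x' \<in> ball xs d2 \<Longrightarrow>
      norm (G x' - G x - DG xs (x' - x)) \<le> 1 / (2 * \<kappa>1) * norm (x' - x)"
    using continuous_derivative_strict_estimate[OF G_diff, of xs "1 / (2 * \<kappa>1)"] DG_cont pos(3)
    by (auto simp: continuous_on_eq_continuous_at)
  define D where "D = min \<delta>1 d2"
  define \<kappa> where "\<kappa> = (1 + norm (DG xs)) * \<kappa>1 + 1"
  define \<gamma> where "\<gamma> = min r D / (16 * (\<kappa> + \<kappa>1 + 1))"
  have D: "0 < D" "D \<le> \<delta>1" "D \<le> d2" using pos(2) d2(1) by (auto simp: D_def)
  have \<kappa>_pos: "1 \<le> \<kappa>" using pos(3) by (simp add: \<kappa>_def)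
  have "0 < 16 * (\<kappa> + \<kappa>1 + 1)" using \<kappa>_pos pos(3) by simp
  then have "\<gamma> * (16 * (\<kappa> + \<kappa>1 + 1)) = min r D" unfolding \<gamma>_def by simp
  then have \<gamma>16: "16 * (\<kappa> * \<gamma>) + 16 * (\<kappa>1 * \<gamma>) + 16 * \<gamma> = min r D" by (simp add: algebra_simps)
  have "0 < \<gamma>" using \<open>0 < 16 * (\<kappa> + \<kappa>1 + 1)\<close> pos(1) D(1) by (simp add: \<gamma>_def)
  moreover have "0 \<le> \<kappa> * \<gamma>" "0 \<le> \<kappa>1 * \<gamma>" using \<open>0 < \<gamma>\<close> \<kappa>_pos pos(3) by simp_all
  moreover have "min r D \<le> r" "min r D \<le> D" by simp_all
  ultimately have \<gamma>: "2 * \<gamma> \<le> r" "4 * (\<kappa> * \<gamma>) \<le> D / 4" "2 * (\<kappa>1 * \<gamma>) \<le> D / 2"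
    "4 * (\<kappa> * \<gamma>) + 3 * \<gamma> < D"
    using \<gamma>16 by linarith+
  obtain \<delta>G where \<delta>G: "0 < \<delta>G" "\<And>x. dist x xs < \<delta>G \<Longrightarrow> dist (G x) (G xs) < \<gamma>"
    using continuous_on_G[of UNIV] \<open>0 < \<gamma>\<close>
    by (metis continuous_at_eps_delta continuous_on_eq_continuous_at open_UNIV UNIV_I)
  have "\<exists>z\<in>{x \<in> A. G x \<in> K}. norm (z - x0) \<le> 4 * \<kappa> * infdist (G x0) K"
    if "x0 \<in> A" "norm (x0 - xs) < min \<delta>G (D / 4)" for x0
    using robinson_feasible_point[OF solve d2(2) pos(3) \<kappa>_def D(2,3) \<gamma>, of x0] \<delta>G(2)[of x0] that
    by (auto simp: dist_norm)
  then have "local_error_bound {x \<in> A. G x \<in> K} A (\<lambda>x. infdist (G x) K) xs (4 * \<kappa>)"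
    unfolding local_error_bound_def using \<delta>G(1) D(1) by (intro exI[of _ "min \<delta>G (D / 4)"]) auto
  moreover have "0 < 4 * \<kappa>" using \<kappa>_pos by simp
  ultimately show ?thesis by (rule that[rotated])
qed

lemma infdist_G_at_xs: "isCont (\<lambda>x. infdist (G x) K) xs" "infdist (G xs) K = 0"
  using continuous_on_G[of UNIV] feasible(2)
  by (auto intro!: continuous_intros simp: continuous_on_eq_continuous_at)

theorem penalty_locally_exact:
  assumes "local_min_on F {x \<in> A. G x \<in> K} xs" "robinson_cq A G DG K xs"
  shows "\<exists>cs\<ge>0. \<forall>c\<ge>cs. local_min_on (\<Phi> c) A xs"
proof -
  obtain \<kappa> where \<kappa>: "0 < \<kappa>" "local_error_bound {x \<in> A. G x \<in> K} A (\<lambda>x. infdist (G x) K) xs \<kappa>"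
    using robinson_error_bound[OF assms(2)] by blast
  obtain L where L: "L-lipschitz_on (ball xs 1) F" by (rule maxfun_lipschitz)
  have "local_min_on (\<Phi> c) A xs" if "L * \<kappa> \<le> c" for c
    unfolding penalty_def
    by (rule exact_penalty_local_min[OF L _ \<kappa>(2) _ infdist_G_at_xs infdist_nonneg assms(1) that])
      (use \<kappa>(1) in auto)
  moreover have "0 \<le> L * \<kappa>" using lipschitz_on_nonneg[OF L] \<kappa>(1) by simp
  ultimately show ?thesis by blast
qed

theorem first_order_growth_iff_penalty:
  assumes "robinson_cq A G DG K xs"
  shows "first_order_growth_on F {x \<in> A. G x \<in> K} xs \<longleftrightarrow> (\<exists>c\<ge>0. first_order_growth_on (\<Phi> c) A xs)"
proof
  assume growth: "first_order_growth_on F {x \<in> A. G x \<in> K} xs"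
  obtain \<kappa> where \<kappa>: "0 < \<kappa>" "local_error_bound {x \<in> A. G x \<in> K} A (\<lambda>x. infdist (G x) K) xs \<kappa>"
    using robinson_error_bound[OF assms] by blast
  obtain L where L: "L-lipschitz_on (ball xs 1) F" by (rule maxfun_lipschitz)
  obtain c where "0 \<le> c" "first_order_growth_on (\<lambda>x. F x + c * infdist (G x) K) A xs"
    using exact_penalty_first_order_growth[OF L _ \<kappa>(2) _ infdist_G_at_xs growth] \<kappa>(1) by auto
  then show "\<exists>c\<ge>0. first_order_growth_on (\<Phi> c) A xs" unfolding penalty_def by blast
next
  assume "\<exists>c\<ge>0. first_order_growth_on (\<Phi> c) A xs"
  then obtain c \<rho> U where "0 < \<rho>" "open U" "xs \<in> U" "\<And>x. x \<in> U \<inter> A \<Longrightarrow> \<Phi> c xs + \<rho> * norm (x - xs) \<le> \<Phi> c x"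
    unfolding first_order_growth_on_def by blast
  then show "first_order_growth_on F {x \<in> A. G x \<in> K} xs"
    unfolding first_order_growth_on_def using feasible(2) penalty_feasible by (metis (mono_tags) IntE IntI mem_Collect_eq)
qed

end

theorem theorem5:
  fixes A :: "'a::euclidean_space set" and K :: "'b::banach set" and W :: "'w::t2_space set"
    and f :: "'a \<Rightarrow> 'w \<Rightarrow> real" and gf :: "'a \<Rightarrow> 'w \<Rightarrow> 'a"
    and G :: "'a \<Rightarrow> 'b" and DG :: "'a \<Rightarrow> ('a \<Rightarrow>\<^sub>L 'b)" and xs :: 'a
  assumes A: "A \<noteq> {}" "closed A" "convex A"
    and K: "K \<noteq> {}" "closed K" "convex K" "cone K"
    and W: "W \<noteq> {}" "compact W"
    and f_diff: "\<And>\<omega> x. \<omega> \<in> W \<Longrightarrow> ((\<lambda>x. f x \<omega>) has_derivative (\<lambda>h. gf x \<omega> \<bullet> h)) (at x)"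
    and f_cont: "continuous_on (UNIV \<times> W) (\<lambda>p. f (fst p) (snd p))"
    and gf_cont: "continuous_on (UNIV \<times> W) (\<lambda>p. gf (fst p) (snd p))"
    and G_diff: "\<And>x. (G has_derivative blinfun_apply (DG x)) (at x)"
    and DG_cont: "continuous_on UNIV DG"
    and feas: "xs \<in> A" "G xs \<in> K"
  defines "\<Omega> \<equiv> {x \<in> A. G x \<in> K}"
  shows
    "((\<exists>lam. is_lagrange_multiplier f W A G K xs lam) \<longleftrightarrow>
        (\<exists>c\<ge>0. 0 \<in> minkowski_sum (subdiff_penalty f gf W G DG K c xs) (normal_cone A xs)))
   \<and> (((\<forall>h \<in> contingent_cone A xs - {0}. blinfun_apply (DG xs) h \<in> contingent_cone K (G xs) \<longrightarrow>
          (SUP \<omega>\<in>active_set f W xs. gf xs \<omega> \<bullet> h) > 0)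
        \<longleftrightarrow> (\<exists>c\<ge>0. 0 \<in> interior (minkowski_sum (subdiff_penalty f gf W G DG K c xs) (normal_cone A xs))))
      \<and> ((\<exists>c\<ge>0. 0 \<in> interior (minkowski_sum (subdiff_penalty f gf W G DG K c xs) (normal_cone A xs)))
        \<longleftrightarrow> (\<exists>c\<ge>0. first_order_growth_on (penalty f W G K c) A xs)))
   \<and> ((local_min_on (maxfun f W) \<Omega> xs \<and> robinson_cq A G DG K xs \<longrightarrow>
         (\<exists>cs\<ge>0. \<forall>c\<ge>cs. local_min_on (penalty f W G K c) A xs))
      \<and> (robinson_cq A G DG K xs \<longrightarrow>
         (first_order_growth_on (maxfun f W) \<Omega> xs \<longleftrightarrow>
          (\<exists>c\<ge>0. first_order_growth_on (penalty f W G K c) A xs))))"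
proof -
  interpret penalty_problem f gf W A K G DG xs
    by unfold_locales (fact W f_diff f_cont gf_cont A(2,3) K(2-4) G_diff DG_cont feas)+
  have a_iff: "(\<forall>h \<in> contingent_cone A xs - {0}. blinfun_apply (DG xs) h \<in> contingent_cone K (G xs) \<longrightarrow>
      (SUP \<omega>\<in>active_set f W xs. gf xs \<omega> \<bullet> h) > 0) \<longleftrightarrow> (\<exists>c\<ge>0. dir_deriv_growth c)"
    using sufficient_condition_iff_dir_deriv_growth unfolding danskin_deriv_def .
  have b_iff: "(\<exists>c\<ge>0. 0 \<in> interior (minkowski_sum (subdiff_penalty f gf W G DG K c xs) (normal_cone A xs)))
      \<longleftrightarrow> (\<exists>c\<ge>0. dir_deriv_growth c)"
    using interior_iff_dir_deriv_growth by blast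
  have c_iff: "(\<exists>c\<ge>0. first_order_growth_on (penalty f W G K c) A xs) \<longleftrightarrow> (\<exists>c\<ge>0. dir_deriv_growth c)"
    using first_order_growth_iff_dir_deriv_growth by blast
  show ?thesis
    unfolding \<Omega>_def a_iff b_iff c_iff
    by (simp add: lagrange_multiplier_iff penalty_locally_exact first_order_growth_iff_penalty[unfolded c_iff])
qed

end
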